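(* Let $f:\mathbb{R}^{m\times n}\to\mathbb{R}$ be smooth and strongly convex, let $(U_*,V_* )$ be a critical point of $F$ with $U_*,V_*$ of full column rank $k$, and let $\omega\neq0$. Then the block-diagonal part $D$ of the Hessian $H$ of $F$ at $(U_*,V_* )$ is positive definite, $S_\omega$ is smooth near $(U_*,V_* )$, and \[ S_\omega'(U_*,V_* )=T_\omega:=I-N_\omega^{-1}H,\qquad N_\omega=\tfrac1\omega D+E. \] Equivalently, $S_\omega'(U_*,V_* )=(I-\omega L)^{-1}[(1-\omega)I+\omega R]$ with $L=-D^{-1}E$, $R=-D^{-1}E^\top$, where $L=\begin{pmatrix}0&0\\ \hat S_2'(U_* )&0\end{pmatrix}$, $R=\begin{pmatrix}0&\hat S_1'(V_* )\\0&0\end{pmatrix}$.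
   Context: $F(U,V)=f(UV^\top)$ on $\mathbb{R}^{m\times k}\times\mathbb{R}^{n\times k}$ (Frobenius inner product). $\hat S_1(V)=\operatorname{argmin}_U F(U,V)$, $\hat S_2(U)=\operatorname{argmin}_V F(U,V)$ (for full column rank arguments), and $S_\omega(U,V)=(1-\omega)(U,V)+\omega(\hat S_1(V),\hat S_2((1-\omega)U+\omega\hat S_1(V)))$. The Hessian $H=\nabla^2F(U_*,V_* )$ is viewed as a self-adjoint linear operator on $\mathbb{R}^{m\times k}\times\mathbb{R}^{n\times k}$ in $2\times2$ block form $H=\begin{pmatrix}\nabla_{UU}F&\nabla_{UV}F\\ \nabla_{VU}F&\nabla_{VV}F\end{pmatrix}$ and decomposed as $H=D+E+E^\top$ with $D=\mathrm{diag}(\nabla_{UU}F,\nabla_{VV}F)$ and $E=\begin{pmatrix}0&0\\ \nabla_{VU}F&0\end{pmatrix}$, all evaluated at $(U_*,V_* )$. *)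

theory Defs
  imports "HOL-Analysis.Analysis"
begin

text \<open>C-infinity smoothness on an open set S: there is a family Df of iterated
 directional derivatives (Df [] = f, Df (v#vs) x = derivative of Df vs at x applied to v),
 each of which is Frechet differentiable and continuous on S.\<close>
definition smooth_on :: "'a::euclidean_space set \<Rightarrow> ('a \<Rightarrow> 'b::real_normed_vector) \<Rightarrow> bool" where
  "smooth_on S f \<longleftrightarrow> open S \<and> (\<exists>Df :: 'a list \<Rightarrow> 'a \<Rightarrow> 'b.
      (\<forall>x\<in>S. Df [] x = f x) \<and>
      (\<forall>vs. continuous_on S (Df vs)) \<and>
      (\<forall>vs. \<forall>x\<in>S. (Df vs has_derivative (\<lambda>v. Df (v # vs) x)) (at x)))"

definition strongly_convex :: "('a::real_inner \<Rightarrow> real) \<Rightarrow> bool" where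
  "strongly_convex f \<longleftrightarrow> (\<exists>\<mu>>0. \<forall>x y. \<forall>t::real. 0 \<le> t \<and> t \<le> 1 \<longrightarrow>
      f (t *\<^sub>R x + (1 - t) *\<^sub>R y) \<le> t * f x + (1 - t) * f y - \<mu> / 2 * t * (1 - t) * (norm (x - y))\<^sup>2)"

definition grad :: "('a::euclidean_space \<Rightarrow> real) \<Rightarrow> 'a \<Rightarrow> 'a" where
  "grad F p = (THE g. (F has_derivative (\<lambda>h. g \<bullet> h)) (at p))"

definition hess :: "('a::euclidean_space \<Rightarrow> real) \<Rightarrow> 'a \<Rightarrow> 'a \<Rightarrow> 'a" where
  "hess F p = frechet_derivative (grad F) (at p)"

definition factF :: "(real^'n^'m \<Rightarrow> real) \<Rightarrow> ((real^'k^'m) \<times> (real^'k^'n)) \<Rightarrow> real" where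
  "factF f UV = f (fst UV ** transpose (snd UV))"

definition S1hat :: "(real^'n^'m \<Rightarrow> real) \<Rightarrow> real^'k^'n \<Rightarrow> real^'k^'m" where
  "S1hat f V = (THE U. \<forall>U'. factF f (U, V) \<le> factF f (U', V))"

definition S2hat :: "(real^'n^'m \<Rightarrow> real) \<Rightarrow> real^'k^'m \<Rightarrow> real^'k^'n" where
  "S2hat f U = (THE V. \<forall>V'. factF f (U, V) \<le> factF f (U, V'))"

definition Somega :: "(real^'n^'m \<Rightarrow> real) \<Rightarrow> real \<Rightarrow> ((real^'k^'m) \<times> (real^'k^'n)) \<Rightarrow> ((real^'k^'m) \<times> (real^'k^'n))" where
  "Somega f \<omega> UV = (let U = fst UV; V = snd UV; U' = (1 - \<omega>) *\<^sub>R U + \<omega> *\<^sub>R S1hat f V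
      in (U', (1 - \<omega>) *\<^sub>R V + \<omega> *\<^sub>R S2hat f U'))"

text \<open>Block parts of a linear operator H on a product space:
  D = diag(H_UU, H_VV), E = [[0,0],[H_VU,0]], E^T = [[0,H_UV],[0,0]].\<close>
definition blockD :: "('a::real_vector \<times> 'b::real_vector \<Rightarrow> 'a \<times> 'b) \<Rightarrow> 'a \<times> 'b \<Rightarrow> 'a \<times> 'b" where
  "blockD H x = (fst (H (fst x, 0)), snd (H (0, snd x)))"

definition blockE :: "('a::real_vector \<times> 'b::real_vector \<Rightarrow> 'a \<times> 'b) \<Rightarrow> 'a \<times> 'b \<Rightarrow> 'a \<times> 'b" where
  "blockE H x = (0, snd (H (fst x, 0)))"

definition blockEt :: "('a::real_vector \<times> 'b::real_vector \<Rightarrow> 'a \<times> 'b) \<Rightarrow> 'a \<times> 'b \<Rightarrow> 'a \<times> 'b" where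
  "blockEt H x = (fst (H (0, snd x)), 0)"

end

theory Submission
  imports Defs
begin

text \<open>
  Strong convexity of \<open>f\<close> with modulus \<open>\<mu>\<close> and full column rank of \<open>U\<^sub>*\<close>, \<open>V\<^sub>*\<close> make the diagonal
  blocks of \<open>H\<close> positive definite: along the line \<open>(U\<^sub>*, V\<^sub>*) + t (u, 0)\<close> the function \<open>F\<close> is \<open>f\<close>
  along the line through \<open>U\<^sub>*V\<^sub>*\<^sup>T\<close> in direction \<open>uV\<^sub>*\<^sup>T \<noteq> 0\<close>, so its curvature is at least
  \<open>\<mu> \<parallel>uV\<^sub>*\<^sup>T\<parallel>\<^sup>2\<close>. The same argument shows that near the critical point \<open>\<^bold>S\<^sub>1(V)\<close> and \<open>\<^bold>S\<^sub>2(U)\<close> are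
  the unique solutions of \<open>\<nabla>\<^sub>UF = 0\<close> and \<open>\<nabla>\<^sub>VF = 0\<close>, so by the implicit function theorem they are
  smooth with derivatives \<open>-H\<^sub>U\<^sub>U\<^sup>-\<^sup>1H\<^sub>U\<^sub>V\<close> and \<open>-H\<^sub>V\<^sub>V\<^sup>-\<^sup>1H\<^sub>V\<^sub>U\<close>. \<open>S\<^sub>\<omega>\<close> is the relaxed alternating step
  built from \<open>\<^bold>S\<^sub>1\<close> and \<open>\<^bold>S\<^sub>2\<close>, and by the chain rule its derivative is the same step built from these
  derivatives; solving the resulting block triangular system gives both \<open>I - N\<^sub>\<omega>\<^sup>-\<^sup>1H\<close> and
  \<open>(I - \<omega>L)\<^sup>-\<^sup>1((1 - \<omega>)I + \<omega>R)\<close>.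
\<close>

section \<open>Smooth maps\<close>

lemma smooth_onI:
  assumes "open S" "\<And>x. x \<in> S \<Longrightarrow> Df [] x = f x" "\<And>vs. continuous_on S (Df vs)"
    "\<And>vs x. x \<in> S \<Longrightarrow> (Df vs has_derivative (\<lambda>v. Df (v # vs) x)) (at x)"
  shows "smooth_on S f"
  unfolding smooth_on_def using assms by blast

lemma smooth_onE:
  assumes "smooth_on S f"
  obtains Df where "open S" "\<And>x. x \<in> S \<Longrightarrow> Df [] x = f x" "\<And>vs. continuous_on S (Df vs)"
    "\<And>vs x. x \<in> S \<Longrightarrow> (Df vs has_derivative (\<lambda>v. Df (v # vs) x)) (at x)"
  using assms unfolding smooth_on_def by blast

lemma smooth_on_coinduct:
  fixes S :: "'a::euclidean_space set" and P :: "('a \<Rightarrow> 'b::real_normed_vector) \<Rightarrow> bool"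
  assumes S: "open S" and Pf: "P f"
    and step: "\<And>g. P g \<Longrightarrow> \<exists>g'. (\<forall>x\<in>S. (g has_derivative g' x) (at x)) \<and> (\<forall>v. P (\<lambda>x. g' x v))"
  shows "smooth_on S f"
proof -
  define d where "d g = (SOME g'. (\<forall>x\<in>S. (g has_derivative g' x) (at x)) \<and> (\<forall>v. P (\<lambda>x. g' x v)))" for g
  have d: "(\<forall>x\<in>S. (g has_derivative d g x) (at x)) \<and> (\<forall>v. P (\<lambda>x. d g x v))" if "P g" for g
    using someI_ex[OF step[OF that]] unfolding d_def by blast
  define Df where "Df = rec_list f (\<lambda>v vs r. (\<lambda>x. d r x v))"
  have Df_simps: "Df [] = f" "Df (v#vs) = (\<lambda>x. d (Df vs) x v)" for v vs by (simp_all add: Df_def)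
  have P: "P (Df vs)" for vs by (induction vs) (auto simp: Df_simps d Pf)
  have der: "(Df vs has_derivative (\<lambda>v. Df (v # vs) x)) (at x)" if "x \<in> S" for vs x
    using d[OF P[of vs]] that by (simp add: Df_simps)
  show ?thesis
  proof (rule smooth_onI[of _ Df])
    show "continuous_on S (Df vs)" for vs
      by (metis continuous_at_imp_continuous_on der has_derivative_continuous)
  qed (use S der in \<open>simp_all add: Df_simps\<close>)
qed

lemma smooth_on_open: "smooth_on S f \<Longrightarrow> open S"
  by (erule smooth_onE)

lemma smooth_on_cong:
  assumes "smooth_on S f" "\<And>x. x \<in> S \<Longrightarrow> g x = f x"
  shows "smooth_on S g"
proof -
  obtain Df where "open S" "\<And>x. x \<in> S \<Longrightarrow> Df [] x = f x" "\<And>vs. continuous_on S (Df vs)"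
    "\<And>vs x. x \<in> S \<Longrightarrow> (Df vs has_derivative (\<lambda>v. Df (v # vs) x)) (at x)"
    using smooth_onE[OF assms(1)] by blast
  then show ?thesis by (intro smooth_onI[of _ Df]) (simp_all add: assms(2))
qed

lemma smooth_on_subset:
  assumes "smooth_on S f" "open T" "T \<subseteq> S"
  shows "smooth_on T f"
proof -
  obtain Df where "open S" and D0: "\<And>x. x \<in> S \<Longrightarrow> Df [] x = f x" and cont: "\<And>vs. continuous_on S (Df vs)"
    and der: "\<And>vs x. x \<in> S \<Longrightarrow> (Df vs has_derivative (\<lambda>v. Df (v # vs) x)) (at x)"
    using smooth_onE[OF assms(1)] by blast
  show ?thesis
  proof (rule smooth_onI[of _ Df])
    show "continuous_on T (Df vs)" for vs by (rule continuous_on_subset[OF cont assms(3)])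
    show "Df [] x = f x" if "x \<in> T" for x using D0 that assms(3) by blast
    show "(Df vs has_derivative (\<lambda>v. Df (v # vs) x)) (at x)" if "x \<in> T" for vs x
      using der that assms(3) by blast
  qed (rule assms(2))
qed

lemma smooth_on_has_derivative:
  assumes "smooth_on S f"
  obtains f' where "\<And>x. x \<in> S \<Longrightarrow> (f has_derivative f' x) (at x)" "\<And>v. smooth_on S (\<lambda>x. f' x v)"
proof -
  obtain Df where S: "open S" and D0: "\<And>x. x \<in> S \<Longrightarrow> Df [] x = f x"
    and cont: "\<And>vs. continuous_on S (Df vs)"
    and der: "\<And>vs x. x \<in> S \<Longrightarrow> (Df vs has_derivative (\<lambda>v. Df (v # vs) x)) (at x)"
    using smooth_onE[OF assms] by blast
  show ?thesis
  proof
    show "(f has_derivative (\<lambda>v. Df [v] x)) (at x)" if "x \<in> S" for x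
      by (rule has_derivative_transform_within_open[OF der[OF that] S that]) (simp add: D0)
    show "smooth_on S (\<lambda>x. Df [v] x)" for v
      by (rule smooth_onI[of _ "\<lambda>vs. Df (vs @ [v])"]) (simp_all add: S cont der)
  qed
qed

lemma smooth_on_differentiable:
  "smooth_on S f \<Longrightarrow> x \<in> S \<Longrightarrow> f differentiable (at x)"
  by (metis differentiable_def smooth_on_has_derivative)

lemma smooth_on_continuous_on:
  "smooth_on S f \<Longrightarrow> continuous_on S f"
  by (meson continuous_at_imp_continuous_on differentiable_imp_continuous_within smooth_on_differentiable)

definition smooth_deriv :: "'a::euclidean_space set \<Rightarrow> ('a \<Rightarrow> 'b::real_normed_vector) \<Rightarrow> 'a \<Rightarrow> 'a \<Rightarrow> 'b" where
  "smooth_deriv S g = (SOME g'. (\<forall>x\<in>S. (g has_derivative g' x) (at x)) \<and> (\<forall>v. smooth_on S (\<lambda>x. g' x v)))"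

lemma
  assumes "smooth_on S g"
  shows has_derivative_smooth_deriv: "x \<in> S \<Longrightarrow> (g has_derivative smooth_deriv S g x) (at x)"
    and smooth_on_smooth_deriv: "smooth_on S (\<lambda>x. smooth_deriv S g x v)"
proof -
  have "\<exists>g'. (\<forall>x\<in>S. (g has_derivative g' x) (at x)) \<and> (\<forall>v. smooth_on S (\<lambda>x. g' x v))"
    using smooth_on_has_derivative[OF assms] by metis
  from someI_ex[OF this]
  show "x \<in> S \<Longrightarrow> (g has_derivative smooth_deriv S g x) (at x)" "smooth_on S (\<lambda>x. smooth_deriv S g x v)"
    unfolding smooth_deriv_def by blast+
qed

lemma smooth_deriv_unique:
  assumes "smooth_on S g" "x \<in> S" "(g has_derivative g') (at x)"
  shows "smooth_deriv S g x = g'"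
  using has_derivative_smooth_deriv[OF assms(1,2)] assms(3) has_derivative_unique by blast

lemma linear_smooth_deriv:
  "smooth_on S g \<Longrightarrow> x \<in> S \<Longrightarrow> linear (smooth_deriv S g x)"
  using has_derivative_linear has_derivative_smooth_deriv by blast

lemma smooth_on_affine:
  fixes L :: "'a::euclidean_space \<Rightarrow> 'b::real_normed_vector"
  assumes "open S" "linear L"
  shows "smooth_on S (\<lambda>x. L x + c)"
proof (rule smooth_on_coinduct[where P="\<lambda>g. \<exists>L c. linear L \<and> g = (\<lambda>x. L x + c)"])
  fix g :: "'a \<Rightarrow> 'b" assume "\<exists>L c. linear L \<and> g = (\<lambda>x. L x + c)"
  then obtain L c where L: "linear L" and g: "g = (\<lambda>x. L x + c)" by blast
  show "\<exists>g'. (\<forall>x\<in>S. (g has_derivative g' x) (at x)) \<and> (\<forall>v. \<exists>L c. linear L \<and> (\<lambda>x. g' x v) = (\<lambda>x. L x + c))"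
    using L unfolding g
    by (auto intro!: exI[of _ "\<lambda>x. L"] derivative_eq_intros linear_imp_has_derivative exI[of _ "\<lambda>x. 0"]
        simp: linear_0 linear_zero)
qed (use assms in auto)

lemma smooth_on_const: "open S \<Longrightarrow> smooth_on S (\<lambda>x. c)"
  using smooth_on_affine[of S "\<lambda>x. 0" c] by (simp add: linear_zero)

lemma smooth_on_linear: "open S \<Longrightarrow> linear L \<Longrightarrow> smooth_on S L"
  using smooth_on_affine[of S L 0] by simp

lemma smooth_on_fst: "open S \<Longrightarrow> smooth_on S fst"
  by (simp add: smooth_on_linear bounded_linear.linear[OF bounded_linear_fst])

lemma smooth_on_snd: "open S \<Longrightarrow> smooth_on S snd"
  by (simp add: smooth_on_linear bounded_linear.linear[OF bounded_linear_snd])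

lemma smooth_on_id: "open S \<Longrightarrow> smooth_on S (\<lambda>x. x)"
  by (simp add: smooth_on_linear linear_id[unfolded id_def])

text \<open>Smoothness of products needs an invariant closed under differentiation: by the product rule,
  sums of products of smooth functions are such a class.\<close>

lemma has_derivative_sum_list_scaleR:
  fixes xs :: "(('a::euclidean_space \<Rightarrow> real) \<times> ('a \<Rightarrow> 'b::real_normed_vector)) list"
  assumes "\<forall>(a,b)\<in>set xs. smooth_on S a \<and> smooth_on S b" "x \<in> S"
  shows "((\<lambda>x. \<Sum>(a,b)\<leftarrow>xs. a x *\<^sub>R b x) has_derivative
          (\<lambda>v. \<Sum>(a,b)\<leftarrow>xs. a x *\<^sub>R smooth_deriv S b x v + smooth_deriv S a x v *\<^sub>R b x)) (at x)"
  using assms(1)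
proof (induction xs)
  case (Cons p xs)
  obtain a b where p: "p = (a,b)" by fastforce
  have a: "smooth_on S a" and b: "smooth_on S b" using Cons.prems p by auto
  have IH: "((\<lambda>x. \<Sum>(a,b)\<leftarrow>xs. a x *\<^sub>R b x) has_derivative
          (\<lambda>v. \<Sum>(a,b)\<leftarrow>xs. a x *\<^sub>R smooth_deriv S b x v + smooth_deriv S a x v *\<^sub>R b x)) (at x)"
    using Cons by auto
  show ?case
    using has_derivative_add[OF has_derivative_scaleR[OF has_derivative_smooth_deriv[OF a assms(2)]
          has_derivative_smooth_deriv[OF b assms(2)]] IH]
    unfolding p by simp
qed (simp add: has_derivative_const)

lemma smooth_on_sum_list_scaleR:
  fixes xs :: "(('a::euclidean_space \<Rightarrow> real) \<times> ('a \<Rightarrow> 'b::real_normed_vector)) list"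
  assumes "open S" "\<forall>(a,b)\<in>set xs. smooth_on S a \<and> smooth_on S b"
  shows "smooth_on S (\<lambda>x. \<Sum>(a,b)\<leftarrow>xs. a x *\<^sub>R b x)"
proof (rule smooth_on_coinduct[where P="\<lambda>u. \<exists>xs::(('a \<Rightarrow> real) \<times> ('a \<Rightarrow> 'b)) list.
     (\<forall>(a,b)\<in>set xs. smooth_on S a \<and> smooth_on S b) \<and> (\<forall>x\<in>S. u x = (\<Sum>(a,b)\<leftarrow>xs. a x *\<^sub>R b x))"])
  fix u :: "'a \<Rightarrow> 'b"
  assume "\<exists>xs::(('a \<Rightarrow> real) \<times> ('a \<Rightarrow> 'b)) list.
     (\<forall>(a,b)\<in>set xs. smooth_on S a \<and> smooth_on S b) \<and> (\<forall>x\<in>S. u x = (\<Sum>(a,b)\<leftarrow>xs. a x *\<^sub>R b x))"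
  then obtain xs :: "(('a \<Rightarrow> real) \<times> ('a \<Rightarrow> 'b)) list" where
    xs: "\<forall>(a,b)\<in>set xs. smooth_on S a \<and> smooth_on S b" and u: "\<forall>x\<in>S. u x = (\<Sum>(a,b)\<leftarrow>xs. a x *\<^sub>R b x)"
    by blast
  define ys where
    "ys v = concat (map (\<lambda>(a,b). [(a, \<lambda>x. smooth_deriv S b x v), (\<lambda>x. smooth_deriv S a x v, b)]) xs)" for v
  have ys: "\<forall>(a,b)\<in>set (ys v). smooth_on S a \<and> smooth_on S b" for v
  proof -
    have "smooth_on S a \<and> smooth_on S b" if "(a,b) \<in> set (ys v)" for a b
    proof -
      from that obtain a0 b0 where ab0: "(a0,b0) \<in> set xs"
        and "(a,b) \<in> set [(a0, \<lambda>x. smooth_deriv S b0 x v), (\<lambda>x. smooth_deriv S a0 x v, b0)]"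
        unfolding ys_def by auto
      moreover have "smooth_on S a0" "smooth_on S b0" using xs ab0 by auto
      ultimately show ?thesis using smooth_on_smooth_deriv[of S a0 v] smooth_on_smooth_deriv[of S b0 v] by auto
    qed
    then show ?thesis by blast
  qed
  have sum_ys: "(\<Sum>(a,b)\<leftarrow>ys v. a x *\<^sub>R b x)
      = (\<Sum>(a,b)\<leftarrow>xs. a x *\<^sub>R smooth_deriv S b x v + smooth_deriv S a x v *\<^sub>R b x)" for v x
    unfolding ys_def by (induction xs) (auto simp: algebra_simps)
  show "\<exists>g'. (\<forall>x\<in>S. (u has_derivative g' x) (at x)) \<and> (\<forall>v. \<exists>xs::(('a \<Rightarrow> real) \<times> ('a \<Rightarrow> 'b)) list.
     (\<forall>(a,b)\<in>set xs. smooth_on S a \<and> smooth_on S b) \<and> (\<forall>x\<in>S. g' x v = (\<Sum>(a,b)\<leftarrow>xs. a x *\<^sub>R b x)))"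
  proof (rule exI, intro conjI ballI allI)
    fix x assume x: "x \<in> S"
    show "(u has_derivative (\<lambda>v. \<Sum>(a,b)\<leftarrow>xs. a x *\<^sub>R smooth_deriv S b x v + smooth_deriv S a x v *\<^sub>R b x)) (at x)"
      by (rule has_derivative_transform_within_open[OF has_derivative_sum_list_scaleR[OF xs x] \<open>open S\<close> x])
         (use u in auto)
  next
    fix v
    show "\<exists>xs'::(('a \<Rightarrow> real) \<times> ('a \<Rightarrow> 'b)) list. (\<forall>(a,b)\<in>set xs'. smooth_on S a \<and> smooth_on S b) \<and>
       (\<forall>x\<in>S. (\<Sum>(a,b)\<leftarrow>xs. a x *\<^sub>R smooth_deriv S b x v + smooth_deriv S a x v *\<^sub>R b x) = (\<Sum>(a,b)\<leftarrow>xs'. a x *\<^sub>R b x))"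
      by (rule exI[of _ "ys v"]) (use ys[of v] sum_ys[where v=v] in auto)
  qed
qed (use assms in auto)

lemma smooth_on_scaleR:
  fixes a :: "'a::euclidean_space \<Rightarrow> real" and b :: "'a \<Rightarrow> 'b::real_normed_vector"
  assumes "smooth_on S a" "smooth_on S b"
  shows "smooth_on S (\<lambda>x. a x *\<^sub>R b x)"
  using smooth_on_sum_list_scaleR[OF smooth_on_open[OF assms(1)], of "[(a,b)]"] assms by simp

lemma smooth_on_add:
  fixes a b :: "'a::euclidean_space \<Rightarrow> 'b::real_normed_vector"
  assumes "smooth_on S a" "smooth_on S b"
  shows "smooth_on S (\<lambda>x. a x + b x)"
proof -
  have o: "open S" using smooth_on_open[OF assms(1)] .
  have "smooth_on S (\<lambda>x. \<Sum>(a,b)\<leftarrow>[(\<lambda>x. 1, a), (\<lambda>x. 1, b)]. a x *\<^sub>R b x)"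
    by (rule smooth_on_sum_list_scaleR[OF o]) (use assms smooth_on_const[OF o] in simp)
  then show ?thesis by simp
qed

lemma smooth_on_sum:
  fixes a :: "'i \<Rightarrow> 'a::euclidean_space \<Rightarrow> 'b::real_normed_vector"
  assumes "open S" "\<And>i. i \<in> I \<Longrightarrow> smooth_on S (a i)"
  shows "smooth_on S (\<lambda>x. \<Sum>i\<in>I. a i x)"
  using assms(2)
proof (induction I rule: infinite_finite_induct)
  case (insert x F)
  then show ?case using smooth_on_add[of S "a x" "\<lambda>y. \<Sum>i\<in>F. a i y"] by simp
qed (simp_all add: smooth_on_const[OF assms(1)])

lemma smooth_on_const_scaleR:
  fixes b :: "'a::euclidean_space \<Rightarrow> 'b::real_normed_vector"
  assumes "smooth_on S b"
  shows "smooth_on S (\<lambda>x. c *\<^sub>R b x)"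
  using smooth_on_scaleR[OF smooth_on_const[OF smooth_on_open[OF assms]] assms] .

lemma smooth_on_scaleR_const:
  fixes a :: "'a::euclidean_space \<Rightarrow> real"
  assumes "smooth_on S a"
  shows "smooth_on S (\<lambda>x. a x *\<^sub>R c)"
  using smooth_on_scaleR[OF assms smooth_on_const[OF smooth_on_open[OF assms]]] .

lemma linear_eq_sum_Basis:
  fixes f :: "'a::euclidean_space \<Rightarrow> 'b::real_vector"
  assumes "linear f"
  shows "f w = (\<Sum>b\<in>Basis. (w \<bullet> b) *\<^sub>R f b)"
proof -
  have "f w = f (\<Sum>b\<in>Basis. (w \<bullet> b) *\<^sub>R b)" by (simp add: euclidean_representation)
  also have "\<dots> = (\<Sum>b\<in>Basis. (w \<bullet> b) *\<^sub>R f b)"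
    by (simp add: linear_sum[OF assms] linear_scale[OF assms])
  finally show ?thesis .
qed

lemma smooth_on_linear_comp:
  fixes c :: "'a::euclidean_space \<Rightarrow> 'b::real_normed_vector" and L :: "'b \<Rightarrow> 'c::real_normed_vector"
  assumes "smooth_on S c" "bounded_linear L"
  shows "smooth_on S (\<lambda>x. L (c x))"
proof (rule smooth_on_coinduct[where P="\<lambda>u. \<exists>c. smooth_on S c \<and> (\<forall>x\<in>S. u x = L (c x))"])
  fix u :: "'a \<Rightarrow> 'c" assume "\<exists>c. smooth_on S c \<and> (\<forall>x\<in>S. u x = L (c x))"
  then obtain c where c: "smooth_on S c" and u: "\<forall>x\<in>S. u x = L (c x)" by blast
  show "\<exists>g'. (\<forall>x\<in>S. (u has_derivative g' x) (at x)) \<and> (\<forall>v. \<exists>c. smooth_on S c \<and> (\<forall>x\<in>S. g' x v = L (c x)))"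
  proof (rule exI[of _ "\<lambda>x v. L (smooth_deriv S c x v)"], intro conjI ballI allI)
    fix x assume x: "x \<in> S"
    show "(u has_derivative (\<lambda>v. L (smooth_deriv S c x v))) (at x)"
      by (rule has_derivative_transform_within_open[OF bounded_linear.has_derivative[OF assms(2)
            has_derivative_smooth_deriv[OF c x]] smooth_on_open[OF c] x])
         (use u in auto)
  qed (use smooth_on_smooth_deriv[OF c] in blast)
qed (use assms smooth_on_open in auto)

lemma smooth_on_precomp_linear:
  fixes c :: "'a::euclidean_space \<Rightarrow> 'b::real_normed_vector" and L :: "'d::euclidean_space \<Rightarrow> 'a"
  assumes "smooth_on S c" "linear L" "T \<subseteq> L -` S" "open T"
  shows "smooth_on T (\<lambda>x. c (L x))"
proof (rule smooth_on_coinduct[where P="\<lambda>u. \<exists>c. smooth_on S c \<and> (\<forall>x\<in>T. u x = c (L x))"])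
  fix u :: "'d \<Rightarrow> 'b" assume "\<exists>c. smooth_on S c \<and> (\<forall>x\<in>T. u x = c (L x))"
  then obtain c where c: "smooth_on S c" and u: "\<forall>x\<in>T. u x = c (L x)" by blast
  show "\<exists>g'. (\<forall>x\<in>T. (u has_derivative g' x) (at x)) \<and> (\<forall>v. \<exists>c. smooth_on S c \<and> (\<forall>x\<in>T. g' x v = c (L x)))"
  proof (rule exI[of _ "\<lambda>x v. smooth_deriv S c (L x) (L v)"], intro conjI ballI allI)
    fix x assume x: "x \<in> T"
    then have "L x \<in> S" using assms(3) by auto
    then have "((\<lambda>x. c (L x)) has_derivative (\<lambda>v. smooth_deriv S c (L x) (L v))) (at x)"
      using has_derivative_compose[OF linear_imp_has_derivative[OF assms(2)] has_derivative_smooth_deriv[OF c]]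
      by (simp add: o_def)
    then show "(u has_derivative (\<lambda>v. smooth_deriv S c (L x) (L v))) (at x)"
      by (rule has_derivative_transform_within_open[OF _ \<open>open T\<close> x]) (use u in auto)
  qed (use smooth_on_smooth_deriv[OF c] in blast)
qed (use assms in blast)+

lemma smooth_on_inner_const:
  fixes c :: "'a::euclidean_space \<Rightarrow> 'b::real_inner"
  shows "smooth_on S c \<Longrightarrow> smooth_on S (\<lambda>x. c x \<bullet> w)"
  using smooth_on_linear_comp[OF _ bounded_linear_inner_left] .

lemma smooth_on_Pair:
  fixes a :: "'a::euclidean_space \<Rightarrow> 'b::real_normed_vector" and b :: "'a \<Rightarrow> 'c::real_normed_vector"
  assumes "smooth_on S a" "smooth_on S b"
  shows "smooth_on S (\<lambda>x. (a x, b x))"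
proof -
  have "smooth_on S (\<lambda>x. (a x, 0::'c))" "smooth_on S (\<lambda>x. (0::'b, b x))"
    using smooth_on_linear_comp[OF assms(1), of "\<lambda>y. (y, 0)"] smooth_on_linear_comp[OF assms(2), of "\<lambda>y. (0, y)"]
    by (simp_all add: bounded_linear_Pair bounded_linear_ident bounded_linear_zero)
  from smooth_on_add[OF this] show ?thesis by simp
qed

text \<open>The chain rule for \<open>G (x, h x)\<close>: the derivative \<open>G' (x, h x) (v, h' x v)\<close> is again of this
  form once it is expanded in the basis, with the smooth coefficients absorbed into a new \<open>G\<close>.\<close>

lemma smooth_on_compose_pair:
  fixes h :: "'a::euclidean_space \<Rightarrow> 'b::euclidean_space" and G :: "'a \<times> 'b \<Rightarrow> 'c::real_normed_vector"
  assumes h: "smooth_on S h" and G0: "smooth_on T G" and ST: "\<And>x. x \<in> S \<Longrightarrow> (x, h x) \<in> T"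
  shows "smooth_on S (\<lambda>x. G (x, h x))"
proof -
  have oS: "open S" using smooth_on_open[OF h] .
  define T' where "T' = T \<inter> (S \<times> UNIV)"
  have oT': "open T'" unfolding T'_def using smooth_on_open[OF G0] oS by (auto intro: open_Times)
  have ST': "(x, h x) \<in> T'" if "x \<in> S" for x using ST that unfolding T'_def by auto
  show ?thesis
  proof (rule smooth_on_coinduct[where P="\<lambda>u. \<exists>G. smooth_on T' G \<and> (\<forall>x\<in>S. u x = G (x, h x))"])
    show "\<exists>G'. smooth_on T' G' \<and> (\<forall>x\<in>S. G (x, h x) = G' (x, h x))"
      using smooth_on_subset[OF G0 oT'] unfolding T'_def by blast
    fix u :: "'a \<Rightarrow> 'c" assume "\<exists>G. smooth_on T' G \<and> (\<forall>x\<in>S. u x = G (x, h x))"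
    then obtain G where G: "smooth_on T' G" and u: "\<forall>x\<in>S. u x = G (x, h x)" by blast
    define G' where "G' = smooth_deriv T' G"
    define h' where "h' = smooth_deriv S h"
    show "\<exists>g'. (\<forall>x\<in>S. (u has_derivative g' x) (at x)) \<and> (\<forall>v. \<exists>G. smooth_on T' G \<and> (\<forall>x\<in>S. g' x v = G (x, h x)))"
    proof (rule exI[of _ "\<lambda>x v. G' (x, h x) (v, h' x v)"], intro conjI ballI allI)
      fix x assume x: "x \<in> S"
      have "((\<lambda>x. G (x, h x)) has_derivative (\<lambda>v. G' (x, h x) (v, h' x v))) (at x)"
        using has_derivative_compose[OF has_derivative_Pair[OF has_derivative_ident
              has_derivative_smooth_deriv[OF h x]]
            has_derivative_smooth_deriv[OF G ST'[OF x]]]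
        by (simp add: o_def G'_def h'_def)
      then show "(u has_derivative (\<lambda>v. G' (x, h x) (v, h' x v))) (at x)"
        by (rule has_derivative_transform_within_open[OF _ oS x]) (use u in auto)
    next
      fix v
      define Gt where "Gt z = (\<Sum>b\<in>Basis. ((v, h' (fst z) v) \<bullet> b) *\<^sub>R G' z b)" for z
      have "smooth_on T' (\<lambda>z. h' (fst z) v)"
        unfolding h'_def
        by (rule smooth_on_precomp_linear[OF smooth_on_smooth_deriv[OF h]
              bounded_linear.linear[OF bounded_linear_fst] _ oT'])
           (auto simp: T'_def)
      then have "smooth_on T' (\<lambda>z. (v, h' (fst z) v) \<bullet> b)" for b
        by (rule smooth_on_inner_const[OF smooth_on_Pair[OF smooth_on_const[OF oT']]])
      then have "smooth_on T' Gt"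
        unfolding Gt_def G'_def
        by (rule smooth_on_sum[OF oT', OF smooth_on_scaleR[OF _ smooth_on_smooth_deriv[OF G]]])
      moreover have "G' (x, h x) (v, h' x v) = Gt (x, h x)" if "x \<in> S" for x
        unfolding Gt_def G'_def fst_conv by (rule linear_eq_sum_Basis[OF linear_smooth_deriv[OF G ST'[OF that]]])
      ultimately show "\<exists>G. smooth_on T' G \<and> (\<forall>x\<in>S. G' (x, h x) (v, h' x v) = G (x, h x))"
        by blast
    qed
  qed (use oS in auto)
qed

lemma smooth_on_compose:
  fixes h :: "'a::euclidean_space \<Rightarrow> 'b::euclidean_space" and G :: "'b \<Rightarrow> 'c::real_normed_vector"
  assumes h: "smooth_on S h" and G: "smooth_on T G" and ST: "\<And>x. x \<in> S \<Longrightarrow> h x \<in> T"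
  shows "smooth_on S (\<lambda>x. G (h x))"
proof -
  have "smooth_on (UNIV \<times> T) (\<lambda>z. G (snd z))"
    by (rule smooth_on_precomp_linear[OF G bounded_linear.linear[OF bounded_linear_snd]])
       (auto intro: open_Times[OF open_UNIV smooth_on_open[OF G]])
  from smooth_on_compose_pair[OF h this] ST show ?thesis by simp
qed

lemma smooth_on_bilinear:
  fixes B :: "'a::euclidean_space \<Rightarrow> 'b::euclidean_space \<Rightarrow> 'c::real_normed_vector"
    and a :: "'d::euclidean_space \<Rightarrow> 'a" and b :: "'d \<Rightarrow> 'b"
  assumes B: "bounded_bilinear B" and a: "smooth_on S a" and b: "smooth_on S b"
  shows "smooth_on S (\<lambda>x. B (a x) (b x))"
proof -
  have o: "open S" using smooth_on_open[OF a] .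
  have e: "B p q = (\<Sum>i\<in>Basis. (p \<bullet> i) *\<^sub>R (\<Sum>j\<in>Basis. (q \<bullet> j) *\<^sub>R B i j))" for p q
  proof -
    have "B p q = (\<Sum>i\<in>Basis. (p \<bullet> i) *\<^sub>R B i q)"
      by (rule linear_eq_sum_Basis[OF bounded_linear.linear[OF bounded_bilinear.bounded_linear_left[OF B]]])
    also have "\<dots> = (\<Sum>i\<in>Basis. (p \<bullet> i) *\<^sub>R (\<Sum>j\<in>Basis. (q \<bullet> j) *\<^sub>R B i j))"
      by (rule sum.cong[OF refl])
         (subst linear_eq_sum_Basis[OF bounded_linear.linear[OF bounded_bilinear.bounded_linear_right[OF B]]],
          rule refl)
    finally show ?thesis .
  qed
  have "smooth_on S (\<lambda>x. \<Sum>i\<in>Basis. (a x \<bullet> i) *\<^sub>R (\<Sum>j\<in>Basis. (b x \<bullet> j) *\<^sub>R B i j))"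
    by (rule smooth_on_sum[OF o], rule smooth_on_scaleR[OF smooth_on_inner_const[OF a]],
        rule smooth_on_sum[OF o], rule smooth_on_scaleR_const[OF smooth_on_inner_const[OF b]])
  then show ?thesis by (rule smooth_on_cong) (rule e)
qed

section \<open>Smooth inverse and implicit functions\<close>

lemma local_inverse:
  fixes \<Psi> :: "'a::euclidean_space \<Rightarrow> 'a"
  assumes sm: "smooth_on \<Omega> \<Psi>" and x0: "x0 \<in> \<Omega>" and bij0: "bij (smooth_deriv \<Omega> \<Psi> x0)"
  obtains U V g where "open U" "U \<subseteq> \<Omega>" "x0 \<in> U" "open V" "\<Psi> x0 \<in> V" "homeomorphism U V \<Psi> g"
    "\<And>y. y \<in> V \<Longrightarrow> (g has_derivative inv (smooth_deriv \<Omega> \<Psi> (g y))) (at y)"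
    "\<And>y. y \<in> V \<Longrightarrow> bij (smooth_deriv \<Omega> \<Psi> (g y))"
proof -
  have oO: "open \<Omega>" using smooth_on_open[OF sm] .
  have der: "(\<Psi> has_derivative smooth_deriv \<Omega> \<Psi> x) (at x)" if "x \<in> \<Omega>" for x
    by (rule has_derivative_smooth_deriv[OF sm that])
  have bl: "bounded_linear (smooth_deriv \<Omega> \<Psi> x)" if "x \<in> \<Omega>" for x
    using der[OF that] has_derivative_bounded_linear by blast
  define f' where "f' x = Blinfun (smooth_deriv \<Omega> \<Psi> x)" for x
  have f'a: "blinfun_apply (f' x) = smooth_deriv \<Omega> \<Psi> x" if "x \<in> \<Omega>" for x
    unfolding f'_def using bl[OF that] by (simp add: bounded_linear_Blinfun_apply)
  have derf: "(\<Psi> has_derivative blinfun_apply (f' x)) (at x)" if "x \<in> \<Omega>" for x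
    using der[OF that] f'a[OF that] by simp
  have contf: "continuous_on \<Omega> f'"
  proof (rule continuous_on_blinfun_componentwise)
    fix i :: 'a
    have "continuous_on \<Omega> (\<lambda>x. smooth_deriv \<Omega> \<Psi> x i)"
      by (rule smooth_on_continuous_on[OF smooth_on_smooth_deriv[OF sm]])
    then show "continuous_on \<Omega> (\<lambda>x. blinfun_apply (f' x) i)"
      by (rule continuous_on_eq) (auto simp: f'a)
  qed
  define L where "L = smooth_deriv \<Omega> \<Psi> x0"
  have Lbl: "bounded_linear L" using bl[OF x0] unfolding L_def .
  have Linj: "inj L" using bij0 unfolding L_def bij_def by blast
  have iLbl: "bounded_linear (inv L)" by (rule inj_linear_imp_inv_bounded_linear[OF Lbl Linj])
  have invf: "Blinfun (inv L) o\<^sub>L f' x0 = id_blinfun"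
    by (rule blinfun_eqI)
       (simp add: f'a[OF x0] bounded_linear_Blinfun_apply[OF iLbl] L_def[symmetric] inv_f_f[OF Linj])
  obtain U V g g' where U: "open U" "U \<subseteq> \<Omega>" "x0 \<in> U" and V: "open V" "\<Psi> x0 \<in> V" and hom: "homeomorphism U V \<Psi> g"
    and gd: "\<And>y. y \<in> V \<Longrightarrow> (g has_derivative (g' y)) (at y)"
    and g': "\<And>y. y \<in> V \<Longrightarrow> g' y = inv (blinfun_apply (f'(g y)))"
    and bij: "\<And>y. y \<in> V \<Longrightarrow> bij (blinfun_apply (f'(g y)))"
    using inverse_function_theorem[OF oO derf contf x0 invf] by blast
  have gV: "g y \<in> \<Omega>" if "y \<in> V" for y
    using hom that U(2) unfolding homeomorphism_def by auto
  show ?thesis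
  proof (rule that[OF U V hom])
    show "(g has_derivative inv (smooth_deriv \<Omega> \<Psi> (g y))) (at y)" if "y \<in> V" for y
      using gd[OF that] g'[OF that] f'a[OF gV[OF that]] by simp
    show "bij (smooth_deriv \<Omega> \<Psi> (g y))" if "y \<in> V" for y
      using bij[OF that] f'a[OF gV[OF that]] by simp
  qed
qed

lemma has_derivative_inv_linear_family:
  fixes M :: "'c::euclidean_space \<Rightarrow> 'd::euclidean_space \<Rightarrow> 'd"
  assumes oO: "open \<Omega>" and sm: "\<And>y. smooth_on \<Omega> (\<lambda>z. M z y)"
    and lin: "\<And>z. z \<in> \<Omega> \<Longrightarrow> linear (M z)" and bj: "\<And>z. z \<in> \<Omega> \<Longrightarrow> bij (M z)"
    and z0: "z0 \<in> \<Omega>"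
  shows "((\<lambda>z. inv (M z) w) has_derivative
          (\<lambda>v. - inv (M z0) (\<Sum>b\<in>Basis. (inv (M z0) w \<bullet> b) *\<^sub>R smooth_deriv \<Omega> (\<lambda>z. M z b) z0 v))) (at z0)"
proof -
  define m where "m b = smooth_deriv \<Omega> (\<lambda>z. M z b)" for b
  have md: "((\<lambda>z. M z b) has_derivative m b z) (at z)" if "z \<in> \<Omega>" for z b
    unfolding m_def by (rule has_derivative_smooth_deriv[OF sm that])
  have mlin: "linear (m b z)" if "z \<in> \<Omega>" for z b using md[OF that] has_derivative_linear by blast
  define \<Omega>2 where "\<Omega>2 = \<Omega> \<times> (UNIV :: 'd set)"
  have o2: "open \<Omega>2" unfolding \<Omega>2_def using oO by (auto intro: open_Times)
  define \<Psi> where "\<Psi> p = (fst p, M (fst p) (snd p))" for p :: "'c \<times> 'd"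
  have Mexp: "M z y = (\<Sum>b\<in>Basis. (y \<bullet> b) *\<^sub>R M z b)" if "z \<in> \<Omega>" for z y
    by (rule linear_eq_sum_Basis[OF lin[OF that]])
  have smPsi: "smooth_on \<Omega>2 \<Psi>"
  proof -
    have "smooth_on \<Omega>2 (\<lambda>p. M (fst p) b)" for b
      by (rule smooth_on_precomp_linear[OF sm bounded_linear.linear[OF bounded_linear_fst] _ o2])
         (auto simp: \<Omega>2_def)
    then have "smooth_on \<Omega>2 (\<lambda>p. (snd p \<bullet> b) *\<^sub>R M (fst p) b)" for b
      by (rule smooth_on_scaleR[OF smooth_on_inner_const[OF smooth_on_snd[OF o2]]])
    then have "smooth_on \<Omega>2 (\<lambda>p. \<Sum>b\<in>Basis. (snd p \<bullet> b) *\<^sub>R M (fst p) b)"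
      by (rule smooth_on_sum[OF o2])
    then have "smooth_on \<Omega>2 (\<lambda>p. (fst p, \<Sum>b\<in>Basis. (snd p \<bullet> b) *\<^sub>R M (fst p) b))"
      by (rule smooth_on_Pair[OF smooth_on_fst[OF o2]])
    then show ?thesis
      by (rule smooth_on_cong) (auto simp: \<Psi>_def \<Omega>2_def Mexp)
  qed
  define Pd where "Pd p h = (fst h, M (fst p) (snd h) + (\<Sum>b\<in>Basis. (snd p \<bullet> b) *\<^sub>R m b (fst p) (fst h)))"
    for p h :: "'c \<times> 'd"
  have Psid: "(\<Psi> has_derivative Pd p) (at p)" if p: "p \<in> \<Omega>2" for p
  proof -
    have fp: "fst p \<in> \<Omega>" using p unfolding \<Omega>2_def by auto
    have d1: "((\<lambda>q. M (fst q) b) has_derivative (\<lambda>h. m b (fst p) (fst h))) (at p)" for b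
      using has_derivative_compose[OF has_derivative_fst[OF has_derivative_ident] md[OF fp]] by (simp add: o_def)
    have d2: "((\<lambda>q. snd q \<bullet> b) has_derivative (\<lambda>h. snd h \<bullet> b)) (at p)" for b
      by (rule has_derivative_inner_left[OF has_derivative_snd[OF has_derivative_ident]])
    have "((\<lambda>q. (fst q, \<Sum>b\<in>Basis. (snd q \<bullet> b) *\<^sub>R M (fst q) b)) has_derivative
         (\<lambda>h. (fst h, \<Sum>b\<in>Basis. (snd p \<bullet> b) *\<^sub>R m b (fst p) (fst h) + (snd h \<bullet> b) *\<^sub>R M (fst p) b))) (at p)"
      by (intro has_derivative_Pair has_derivative_fst has_derivative_ident has_derivative_sum
          has_derivative_scaleR d1 d2)
    moreover have "(\<lambda>h. (fst h, \<Sum>b\<in>Basis. (snd p \<bullet> b) *\<^sub>R m b (fst p) (fst h) + (snd h \<bullet> b) *\<^sub>R M (fst p) b)) = Pd p"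
      by (rule ext) (simp add: Pd_def sum.distrib Mexp[OF fp, of "snd _"] add.commute)
    ultimately have "((\<lambda>q. (fst q, \<Sum>b\<in>Basis. (snd q \<bullet> b) *\<^sub>R M (fst q) b)) has_derivative Pd p) (at p)" by simp
    then show ?thesis
      by (rule has_derivative_transform_within_open[OF _ o2 p]) (auto simp: \<Psi>_def \<Omega>2_def Mexp)
  qed
  have sdPsi: "smooth_deriv \<Omega>2 \<Psi> p = Pd p" if "p \<in> \<Omega>2" for p
    by (rule smooth_deriv_unique[OF smPsi that Psid[OF that]])
  define y0 where "y0 = inv (M z0) w"
  define p0 where "p0 = (z0, y0)"
  have p0: "p0 \<in> \<Omega>2" unfolding p0_def \<Omega>2_def using z0 by auto
  have linPd: "linear (Pd p0)" using Psid[OF p0] has_derivative_linear by blast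
  have injPd: "inj (Pd p0)"
  proof (subst linear_injective_0[OF linPd], intro allI impI)
    fix h :: "'c \<times> 'd" assume h: "Pd p0 h = 0"
    then have a: "fst h = 0" unfolding Pd_def by (simp add: prod_eq_iff)
    have "m b z0 0 = 0" for b using mlin[OF z0] linear_0 by blast
    then have "M z0 (snd h) = 0" using h a unfolding Pd_def p0_def by (simp add: prod_eq_iff)
    then have "snd h = 0" using bj[OF z0] lin[OF z0] by (metis bij_def linear_injective_0)
    with a show "h = 0" by (simp add: prod_eq_iff)
  qed
  have bijPd: "bij (Pd p0)"
    using injPd linear_injective_imp_surjective[OF linPd injPd] by (simp add: bij_def)
  obtain U V g where U: "open U" "U \<subseteq> \<Omega>2" "p0 \<in> U" and V: "open V" "\<Psi> p0 \<in> V"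
    and hom: "homeomorphism U V \<Psi> g"
    and gd: "\<And>y. y \<in> V \<Longrightarrow> (g has_derivative inv (smooth_deriv \<Omega>2 \<Psi> (g y))) (at y)"
    using local_inverse[OF smPsi p0] bijPd sdPsi[OF p0] by metis
  have Psip0: "\<Psi> p0 = (z0, w)" unfolding \<Psi>_def p0_def y0_def
    using bj[OF z0] by (simp add: bij_is_surj surj_f_inv_f)
  have gp0: "g (z0, w) = p0" using hom U(3) Psip0 unfolding homeomorphism_def by metis
  define T where "T = (\<lambda>z. (z, w)) -` V"
  have oT: "open T" unfolding T_def
    by (rule open_vimage[OF V(1)]) (intro continuous_intros)
  have z0T: "z0 \<in> T" unfolding T_def using V(2) Psip0 by simp
  have eq: "inv (M z) w = snd (g (z, w))" if "z \<in> T" for z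
  proof -
    have zV: "(z, w) \<in> V" using that unfolding T_def by simp
    have gU: "g (z, w) \<in> U" and Pg: "\<Psi> (g (z, w)) = (z, w)"
      using hom zV unfolding homeomorphism_def by auto
    then have "fst (g (z,w)) = z" and Mz: "M z (snd (g (z, w))) = w" unfolding \<Psi>_def by (auto simp: prod_eq_iff)
    moreover have "z \<in> \<Omega>" using gU U(2) \<open>fst (g (z,w)) = z\<close> unfolding \<Omega>2_def by auto
    ultimately show ?thesis using bj by (metis bij_is_inj inv_f_f)
  qed
  have gd0: "(g has_derivative inv (Pd p0)) (at (z0, w))"
    using gd[OF V(2)[unfolded Psip0]] gp0 sdPsi[OF p0] by simp
  have "((\<lambda>z. snd (g (z, w))) has_derivative (\<lambda>v. snd (inv (Pd p0) (v, 0)))) (at z0)"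
    using has_derivative_compose[OF has_derivative_Pair[OF has_derivative_ident has_derivative_const] gd0]
    by (intro has_derivative_snd) (simp add: o_def)
  moreover have "snd (inv (Pd p0) (v, 0))
      = - inv (M z0) (\<Sum>b\<in>Basis. (inv (M z0) w \<bullet> b) *\<^sub>R smooth_deriv \<Omega> (\<lambda>z. M z b) z0 v)" for v
  proof -
    define c where "c = - inv (M z0) (\<Sum>b\<in>Basis. (y0 \<bullet> b) *\<^sub>R m b z0 v)"
    have "M z0 c = - (\<Sum>b\<in>Basis. (y0 \<bullet> b) *\<^sub>R m b z0 v)"
      unfolding c_def using lin[OF z0] bj[OF z0] by (simp add: linear_neg bij_is_surj surj_f_inv_f)
    then have "Pd p0 (v, c) = (v, 0)" unfolding Pd_def p0_def by simp
    then have "inv (Pd p0) (v, 0) = (v, c)" using injPd by (metis inv_f_f)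
    then show ?thesis unfolding c_def y0_def m_def by simp
  qed
  ultimately have "((\<lambda>z. snd (g (z, w))) has_derivative
          (\<lambda>v. - inv (M z0) (\<Sum>b\<in>Basis. (inv (M z0) w \<bullet> b) *\<^sub>R smooth_deriv \<Omega> (\<lambda>z. M z b) z0 v))) (at z0)"
    by simp
  then show ?thesis
    by (rule has_derivative_transform_within_open[OF _ oT z0T]) (simp add: eq)
qed

text \<open>As \<open>(M\<^sup>-\<^sup>1w)' = -M\<^sup>-\<^sup>1M'M\<^sup>-\<^sup>1w\<close>, this class is closed under directional derivatives, which makes
  all its members smooth by coinduction.\<close>

inductive inv_family_alg :: "'c::euclidean_space set \<Rightarrow> ('c \<Rightarrow> 'd::euclidean_space \<Rightarrow> 'd) \<Rightarrow> ('c \<Rightarrow> real) \<Rightarrow> bool"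
  for \<Omega> M where
  sm: "smooth_on \<Omega> c \<Longrightarrow> inv_family_alg \<Omega> M c"
| gen: "inv_family_alg \<Omega> M (\<lambda>z. inv (M z) w \<bullet> e)"
| add: "inv_family_alg \<Omega> M a \<Longrightarrow> inv_family_alg \<Omega> M b \<Longrightarrow> inv_family_alg \<Omega> M (\<lambda>z. a z + b z)"
| mult: "inv_family_alg \<Omega> M a \<Longrightarrow> inv_family_alg \<Omega> M b \<Longrightarrow> inv_family_alg \<Omega> M (\<lambda>z. a z * b z)"
| cong: "inv_family_alg \<Omega> M a \<Longrightarrow> (\<And>z. z \<in> \<Omega> \<Longrightarrow> b z = a z) \<Longrightarrow> inv_family_alg \<Omega> M b"

lemma inv_family_alg_sum:
  assumes "open \<Omega>" "\<And>i. i \<in> I \<Longrightarrow> inv_family_alg \<Omega> M (a i)"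
  shows "inv_family_alg \<Omega> M (\<lambda>z. \<Sum>i\<in>I. a i z)"
  using assms(2)
proof (induction I rule: infinite_finite_induct)
  case (infinite A) then show ?case using inv_family_alg.sm[OF smooth_on_const[OF assms(1), of 0]] by simp
next
  case empty then show ?case using inv_family_alg.sm[OF smooth_on_const[OF assms(1), of 0]] by simp
next
  case (insert x F)
  have "inv_family_alg \<Omega> M (\<lambda>z. a x z + (\<Sum>i\<in>F. a i z))"
    by (rule inv_family_alg.add) (use insert in auto)
  then show ?case using insert(1,2) by simp
qed

lemma inv_family_alg_deriv:
  fixes M :: "'c::euclidean_space \<Rightarrow> 'd::euclidean_space \<Rightarrow> 'd"
  assumes oO: "open \<Omega>" and sm: "\<And>y. smooth_on \<Omega> (\<lambda>z. M z y)"
    and lin: "\<And>z. z \<in> \<Omega> \<Longrightarrow> linear (M z)" and bj: "\<And>z. z \<in> \<Omega> \<Longrightarrow> bij (M z)"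
  shows "inv_family_alg \<Omega> M c \<Longrightarrow> \<exists>c'. (\<forall>z\<in>\<Omega>. (c has_derivative c' z) (at z)) \<and> (\<forall>v. inv_family_alg \<Omega> M (\<lambda>z. c' z v))"
proof (induction rule: inv_family_alg.induct)
  case (sm c)
  then show ?case
    using has_derivative_smooth_deriv[OF sm.hyps] smooth_on_smooth_deriv[OF sm.hyps] inv_family_alg.sm by blast
next
  case (gen w e)
  define m where "m b = smooth_deriv \<Omega> (\<lambda>z. M z b)" for b
  have invlin: "linear (inv (M z))" if "z \<in> \<Omega>" for z
    using lin[OF that] bj[OF that] by (simp add: bij_is_inj inj_linear_imp_inv_linear)
  have ie: "inv (M z) q \<bullet> e = (\<Sum>c\<in>Basis. (q \<bullet> c) * (inv (M z) c \<bullet> e))" if "z \<in> \<Omega>" for z q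
    by (subst linear_eq_sum_Basis[OF invlin[OF that]]) (simp add: inner_sum_left)
  define D where "D z v = - inv (M z) (\<Sum>b\<in>Basis. (inv (M z) w \<bullet> b) *\<^sub>R m b z v) \<bullet> e" for z v
  show ?case
  proof (rule exI[of _ D], intro conjI ballI allI)
    fix z assume z: "z \<in> \<Omega>"
    show "((\<lambda>z. inv (M z) w \<bullet> e) has_derivative D z) (at z)"
      unfolding D_def m_def
      using has_derivative_inner_left[OF has_derivative_inv_linear_family[OF oO sm lin bj z, of w], of e]
      by simp
  next
    fix v
    define R where "R z = - (\<Sum>b\<in>Basis. (inv (M z) w \<bullet> b) * (\<Sum>c\<in>Basis. (m b z v \<bullet> c) * (inv (M z) c \<bullet> e)))" for z
    have "inv_family_alg \<Omega> M R"
      unfolding R_def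
    proof (rule inv_family_alg.mult[OF inv_family_alg.sm[OF smooth_on_const[OF oO, of "-1"]], simplified])
      show "inv_family_alg \<Omega> M (\<lambda>z. \<Sum>b\<in>Basis. (inv (M z) w \<bullet> b) * (\<Sum>c\<in>Basis. (m b z v \<bullet> c) * (inv (M z) c \<bullet> e)))"
      proof (rule inv_family_alg_sum[OF oO], rule inv_family_alg.mult[OF inv_family_alg.gen],
          rule inv_family_alg_sum[OF oO], rule inv_family_alg.mult[OF _ inv_family_alg.gen])
        fix b c :: 'd
        show "inv_family_alg \<Omega> M (\<lambda>z. m b z v \<bullet> c)"
          unfolding m_def by (rule inv_family_alg.sm[OF smooth_on_inner_const[OF smooth_on_smooth_deriv[OF sm]]])
      qed
    qed
    moreover have "D z v = R z" if "z \<in> \<Omega>" for z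
    proof -
      have "D z v = - (\<Sum>b\<in>Basis. (inv (M z) w \<bullet> b) * (inv (M z) (m b z v) \<bullet> e))"
        unfolding D_def
        by (simp only: linear_sum[OF invlin[OF that]] linear_scale[OF invlin[OF that]] inner_sum_left
            inner_scaleR_left inner_minus_left)
      also have "\<dots> = R z" unfolding R_def
        by (rule arg_cong[where f=uminus], rule sum.cong[OF refl], subst ie[OF that], rule refl)
      finally show ?thesis .
    qed
    ultimately show "inv_family_alg \<Omega> M (\<lambda>z. D z v)" by (rule inv_family_alg.cong)
  qed
next
  case (add a b)
  from add.IH obtain a' b' where a': "\<forall>z\<in>\<Omega>. (a has_derivative a' z) (at z)" "\<forall>v. inv_family_alg \<Omega> M (\<lambda>z. a' z v)"
    and b': "\<forall>z\<in>\<Omega>. (b has_derivative b' z) (at z)" "\<forall>v. inv_family_alg \<Omega> M (\<lambda>z. b' z v)" by blast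
  show ?case
    by (rule exI[of _ "\<lambda>z v. a' z v + b' z v"]) (use a' b' in \<open>simp add: has_derivative_add inv_family_alg.add\<close>)
next
  case (mult a b)
  from mult.IH obtain a' b' where a': "\<forall>z\<in>\<Omega>. (a has_derivative a' z) (at z)" "\<forall>v. inv_family_alg \<Omega> M (\<lambda>z. a' z v)"
    and b': "\<forall>z\<in>\<Omega>. (b has_derivative b' z) (at z)" "\<forall>v. inv_family_alg \<Omega> M (\<lambda>z. b' z v)" by blast
  show ?case
  proof (rule exI[of _ "\<lambda>z v. a z * b' z v + a' z v * b z"], intro conjI ballI allI)
    fix z assume "z \<in> \<Omega>"
    then show "((\<lambda>z. a z * b z) has_derivative (\<lambda>v. a z * b' z v + a' z v * b z)) (at z)"
      using a' b' by (auto intro: has_derivative_mult)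
  next
    fix v show "inv_family_alg \<Omega> M (\<lambda>z. a z * b' z v + a' z v * b z)"
      using a' b' mult.hyps by (intro inv_family_alg.add inv_family_alg.mult) auto
  qed
next
  case (cong a b)
  from cong.IH obtain a' where
    a': "\<forall>z\<in>\<Omega>. (a has_derivative a' z) (at z)" "\<forall>v. inv_family_alg \<Omega> M (\<lambda>z. a' z v)" by blast
  show ?case
  proof (rule exI[of _ a'], intro conjI ballI allI)
    fix z assume z: "z \<in> \<Omega>"
    show "(b has_derivative a' z) (at z)"
      by (rule has_derivative_transform_within_open[OF _ oO z]) (use a' z cong.hyps(2) in auto)
  qed (use a' in auto)
qed

lemma smooth_on_inv_linear_family:
  fixes M :: "'c::euclidean_space \<Rightarrow> 'd::euclidean_space \<Rightarrow> 'd"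
  assumes oO: "open \<Omega>" and sm: "\<And>y. smooth_on \<Omega> (\<lambda>z. M z y)"
    and lin: "\<And>z. z \<in> \<Omega> \<Longrightarrow> linear (M z)" and bj: "\<And>z. z \<in> \<Omega> \<Longrightarrow> bij (M z)"
  shows "smooth_on \<Omega> (\<lambda>z. inv (M z) w)"
proof -
  have alg: "smooth_on \<Omega> c" if "inv_family_alg \<Omega> M c" for c
    by (rule smooth_on_coinduct[where P="inv_family_alg \<Omega> M", OF oO that inv_family_alg_deriv[OF oO sm lin bj]])
  have "smooth_on \<Omega> (\<lambda>z. \<Sum>e\<in>Basis. (inv (M z) w \<bullet> e) *\<^sub>R e)"
    by (rule smooth_on_sum[OF oO], rule smooth_on_scaleR_const, rule alg, rule inv_family_alg.gen)
  then show ?thesis by (simp add: euclidean_representation)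
qed

lemma smooth_local_inverse:
  fixes \<Psi> :: "'a::euclidean_space \<Rightarrow> 'a"
  assumes sm: "smooth_on \<Omega> \<Psi>" and x0: "x0 \<in> \<Omega>" and bij0: "bij (smooth_deriv \<Omega> \<Psi> x0)"
  obtains U V g where "open U" "U \<subseteq> \<Omega>" "x0 \<in> U" "open V" "\<Psi> x0 \<in> V" "homeomorphism U V \<Psi> g"
    "\<And>y. y \<in> V \<Longrightarrow> (g has_derivative inv (smooth_deriv \<Omega> \<Psi> (g y))) (at y)"
    "smooth_on V g"
proof -
  obtain U V g where U: "open U" "U \<subseteq> \<Omega>" "x0 \<in> U" and V: "open V" "\<Psi> x0 \<in> V" and hom: "homeomorphism U V \<Psi> g"
    and gd: "\<And>y. y \<in> V \<Longrightarrow> (g has_derivative inv (smooth_deriv \<Omega> \<Psi> (g y))) (at y)"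
    and bj: "\<And>y. y \<in> V \<Longrightarrow> bij (smooth_deriv \<Omega> \<Psi> (g y))"
    using local_inverse[OF sm x0 bij0] by metis
  have gVU: "g y \<in> U" if "y \<in> V" for y using hom that unfolding homeomorphism_def by auto
  have bjU: "bij (smooth_deriv \<Omega> \<Psi> q)" if "q \<in> U" for q
  proof -
    have "\<Psi> q \<in> V" "g (\<Psi> q) = q" using hom that unfolding homeomorphism_def by auto
    then show ?thesis using bj by metis
  qed
  have linU: "linear (smooth_deriv \<Omega> \<Psi> q)" if "q \<in> U" for q
    using has_derivative_smooth_deriv[OF sm] that U(2) has_derivative_linear by blast
  have smM: "smooth_on U (\<lambda>q. smooth_deriv \<Omega> \<Psi> q y)" for y
    by (rule smooth_on_subset[OF smooth_on_smooth_deriv[OF sm] U(1,2)])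
  have smI: "smooth_on U (\<lambda>q. inv (smooth_deriv \<Omega> \<Psi> q) w)" for w
    by (rule smooth_on_inv_linear_family[OF U(1) smM linU bjU])
  have "smooth_on V g"
  proof (rule smooth_on_coinduct[where P="\<lambda>u. \<exists>G. smooth_on U G \<and> (\<forall>y\<in>V. u y = G (g y))"])
    show "open V" by fact
    show "\<exists>G. smooth_on U G \<and> (\<forall>y\<in>V. g y = G (g y))"
      using smooth_on_id[OF U(1)] by blast
    fix u :: "'a \<Rightarrow> 'a" assume "\<exists>G. smooth_on U G \<and> (\<forall>y\<in>V. u y = G (g y))"
    then obtain G where G: "smooth_on U G" and u: "\<forall>y\<in>V. u y = G (g y)" by blast
    define G' where "G' = smooth_deriv U G"
    have G'd: "(G has_derivative G' q) (at q)" if "q \<in> U" for q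
      unfolding G'_def by (rule has_derivative_smooth_deriv[OF G that])
    have G'lin: "linear (G' q)" if "q \<in> U" for q using G'd[OF that] has_derivative_linear by blast
    show "\<exists>g'. (\<forall>y\<in>V. (u has_derivative g' y) (at y)) \<and> (\<forall>v. \<exists>G. smooth_on U G \<and> (\<forall>y\<in>V. g' y v = G (g y)))"
    proof (rule exI[of _ "\<lambda>y v. G' (g y) (inv (smooth_deriv \<Omega> \<Psi> (g y)) v)"], intro conjI ballI allI)
      fix y assume y: "y \<in> V"
      have "((\<lambda>y. G (g y)) has_derivative (\<lambda>v. G' (g y) (inv (smooth_deriv \<Omega> \<Psi> (g y)) v))) (at y)"
        using has_derivative_compose[OF gd[OF y] G'd[OF gVU[OF y]]] by (simp add: o_def)
      then show "(u has_derivative (\<lambda>v. G' (g y) (inv (smooth_deriv \<Omega> \<Psi> (g y)) v))) (at y)"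
        by (rule has_derivative_transform_within_open[OF _ V(1) y]) (use u in auto)
    next
      fix v
      define Gt where "Gt q = (\<Sum>b\<in>Basis. (inv (smooth_deriv \<Omega> \<Psi> q) v \<bullet> b) *\<^sub>R G' q b)" for q
      have "smooth_on U Gt" unfolding Gt_def
        by (rule smooth_on_sum[OF U(1)], rule smooth_on_scaleR[OF smooth_on_inner_const[OF smI]],
            unfold G'_def, rule smooth_on_smooth_deriv[OF G])
      moreover have "G' (g y) (inv (smooth_deriv \<Omega> \<Psi> (g y)) v) = Gt (g y)" if "y \<in> V" for y
        unfolding Gt_def by (rule linear_eq_sum_Basis[OF G'lin[OF gVU[OF that]]])
      ultimately show "\<exists>G. smooth_on U G \<and> (\<forall>y\<in>V. G' (g y) (inv (smooth_deriv \<Omega> \<Psi> (g y)) v) = G (g y))"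
        by blast
    qed
  qed
  then show ?thesis using that U V hom gd by blast
qed

lemma implicit_function:
  fixes \<Phi> :: "'a::euclidean_space \<times> 'b::euclidean_space \<Rightarrow> 'b"
  assumes sm: "smooth_on \<Omega> \<Phi>" and p0: "(x0, y0) \<in> \<Omega>" and z: "\<Phi> (x0, y0) = 0"
    and d: "(\<Phi> has_derivative \<Phi>') (at (x0, y0))" and bA': "bij (\<lambda>v. \<Phi>' (0, v))"
  obtains X y where "open X" "x0 \<in> X" "y x0 = y0" "\<And>x. x \<in> X \<Longrightarrow> \<Phi> (x, y x) = 0" "smooth_on X y"
    "(y has_derivative (\<lambda>u. - inv (\<lambda>v. \<Phi>' (0, v)) (\<Phi>' (u, 0)))) (at x0)"
proof -
  have oO: "open \<Omega>" using smooth_on_open[OF sm] .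
  have \<Phi>': "smooth_deriv \<Omega> \<Phi> (x0, y0) = \<Phi>'" by (rule smooth_deriv_unique[OF sm p0 d])
  have bA: "bij (\<lambda>u. smooth_deriv \<Omega> \<Phi> (x0, y0) (0, u))" using bA' unfolding \<Phi>' .
  define \<Psi> where "\<Psi> p = (fst p, \<Phi> p)" for p
  have smP: "smooth_on \<Omega> \<Psi>" unfolding \<Psi>_def by (rule smooth_on_Pair[OF smooth_on_fst[OF oO] sm])
  define P' where "P' p h = (fst h, smooth_deriv \<Omega> \<Phi> p h)" for p h
  have Pd: "(\<Psi> has_derivative P' p) (at p)" if "p \<in> \<Omega>" for p
    unfolding \<Psi>_def P'_def
    by (intro has_derivative_Pair has_derivative_fst has_derivative_ident has_derivative_smooth_deriv[OF sm that])
  have sdP: "smooth_deriv \<Omega> \<Psi> p = P' p" if "p \<in> \<Omega>" for p by (rule smooth_deriv_unique[OF smP that Pd[OF that]])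
  define A where "A = (\<lambda>u. smooth_deriv \<Omega> \<Phi> (x0, y0) (0, u))"
  define D where "D = smooth_deriv \<Omega> \<Phi> (x0, y0)"
  have Dlin: "linear D" unfolding D_def using has_derivative_smooth_deriv[OF sm p0] has_derivative_linear by blast
  have Dsplit: "D (a, b) = D (a, 0) + A b" for a b
    unfolding A_def D_def[symmetric] using linear_add[OF Dlin, of "(a,0)" "(0,b)"] by simp
  have linP: "linear (P' (x0, y0))" using Pd[OF p0] has_derivative_linear by blast
  have injP: "inj (P' (x0, y0))"
  proof (subst linear_injective_0[OF linP], intro allI impI)
    fix h :: "'a \<times> 'b" assume h: "P' (x0, y0) h = 0"
    then have a: "fst h = 0" unfolding P'_def by (simp add: prod_eq_iff)
    have Dh: "D h = 0" using h unfolding P'_def D_def by (simp add: prod_eq_iff)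
    have "h = (0, snd h)" using a by (simp add: prod_eq_iff)
    then have "D (0, snd h) = 0" using Dh by metis
    then have "A (snd h) = 0" unfolding A_def D_def .
    moreover have "A 0 = 0" unfolding A_def D_def[symmetric] using linear_0[OF Dlin] by (simp add: zero_prod_def)
    ultimately have "snd h = 0" using bA unfolding A_def[symmetric] by (metis bij_is_inj injD)
    with a show "h = 0" by (simp add: prod_eq_iff)
  qed
  have bijP: "bij (smooth_deriv \<Omega> \<Psi> (x0, y0))"
    using injP linear_injective_imp_surjective[OF linP injP] sdP[OF p0] by (simp add: bij_def)
  obtain U V g where U: "open U" "U \<subseteq> \<Omega>" "(x0, y0) \<in> U" and V: "open V" "\<Psi> (x0, y0) \<in> V"
    and hom: "homeomorphism U V \<Psi> g"
    and gd: "\<And>q. q \<in> V \<Longrightarrow> (g has_derivative inv (smooth_deriv \<Omega> \<Psi> (g q))) (at q)"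
    and gsm: "smooth_on V g"
    using smooth_local_inverse[OF smP p0 bijP] by metis
  have Psi0: "\<Psi> (x0, y0) = (x0, 0)" unfolding \<Psi>_def using z by simp
  have g0: "g (x0, 0) = (x0, y0)" using hom U(3) Psi0 unfolding homeomorphism_def by metis
  define X where "X = (\<lambda>x. (x, 0::'b)) -` V"
  have oX: "open X" unfolding X_def by (rule open_vimage[OF V(1)]) (intro continuous_intros)
  have x0X: "x0 \<in> X" unfolding X_def using V(2) Psi0 by simp
  define y where "y x = snd (g (x, 0))" for x
  have gx: "g (x, 0) = (x, y x)" and Phx: "\<Phi> (x, y x) = 0" and inU: "(x, y x) \<in> U" if "x \<in> X" for x
  proof -
    have xV: "(x, 0) \<in> V" using that unfolding X_def by simp
    have gU: "g (x, 0) \<in> U" and Pg: "\<Psi> (g (x, 0)) = (x, 0)"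
      using hom xV unfolding homeomorphism_def by auto
    show gx: "g (x, 0) = (x, y x)" using Pg unfolding \<Psi>_def y_def by (simp add: prod_eq_iff)
    show "\<Phi> (x, y x) = 0" using Pg unfolding \<Psi>_def gx by simp
    show "(x, y x) \<in> U" using gU gx by simp
  qed
  have smy: "smooth_on X y"
  proof -
    have "smooth_on X (\<lambda>x. (x, 0::'b))" by (rule smooth_on_Pair[OF smooth_on_id[OF oX] smooth_on_const[OF oX]])
    then have "smooth_on X (\<lambda>x. g (x, 0))" by (rule smooth_on_compose[OF _ gsm]) (simp add: X_def)
    then show ?thesis unfolding y_def by (rule smooth_on_linear_comp[OF _ bounded_linear_snd])
  qed
  have gd0: "(g has_derivative inv (P' (x0, y0))) (at (x0, 0))"
    using gd[OF V(2)[unfolded Psi0]] g0 sdP[OF p0] by simp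
  have "(y has_derivative (\<lambda>v. snd (inv (P' (x0, y0)) (v, 0)))) (at x0)"
    unfolding y_def
    using has_derivative_compose[OF has_derivative_Pair[OF has_derivative_ident has_derivative_const] gd0]
    by (intro has_derivative_snd) (simp add: o_def)
  moreover have "snd (inv (P' (x0, y0)) (v, 0)) = - inv A (D (v, 0))" for v
  proof -
    define c where "c = - inv A (D (v, 0))"
    have linA: "linear A" unfolding A_def D_def[symmetric]
      using Dlin by (auto simp: linear_iff linear_add[OF Dlin, symmetric] linear_scale[OF Dlin, symmetric])
    have "A c = - D (v, 0)" unfolding c_def using linA bA unfolding A_def[symmetric]
      by (simp add: linear_neg bij_is_surj surj_f_inv_f)
    then have "P' (x0, y0) (v, c) = (v, 0)" unfolding P'_def D_def[symmetric] using Dsplit[of v c] by simp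
    then have "inv (P' (x0, y0)) (v, 0) = (v, c)" using injP by (metis inv_f_f)
    then show ?thesis unfolding c_def by simp
  qed
  ultimately have "(y has_derivative (\<lambda>v. - inv A (D (v, 0)))) (at x0)" by simp
  moreover have "y x0 = y0" using g0 unfolding y_def by simp
  ultimately show ?thesis
    using that[OF oX x0X _ _ smy] Phx unfolding A_def D_def \<Phi>' by blast
qed

lemma smooth_solution_map:
  fixes \<Phi> :: "'a::euclidean_space \<times> 'b::euclidean_space \<Rightarrow> 'b" and s :: "'a \<Rightarrow> 'b"
  assumes sm: "smooth_on UNIV \<Phi>" and z: "\<Phi> (x0, y0) = 0" and d: "(\<Phi> has_derivative \<Phi>') (at (x0, y0))"
    and bij: "bij (\<lambda>v. \<Phi>' (0, v))"
    and X0: "open X0" "x0 \<in> X0" and unique: "\<And>x y. x \<in> X0 \<Longrightarrow> \<Phi> (x, y) = 0 \<Longrightarrow> s x = y"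
  shows "\<exists>X. open X \<and> x0 \<in> X \<and> smooth_on X s \<and>
    (s has_derivative (\<lambda>u. - inv (\<lambda>v. \<Phi>' (0, v)) (\<Phi>' (u, 0)))) (at x0)"
proof -
  obtain X y where X: "open X" "x0 \<in> X" and "y x0 = y0" and zero: "\<And>x. x \<in> X \<Longrightarrow> \<Phi> (x, y x) = 0"
    and smy: "smooth_on X y" and dy: "(y has_derivative (\<lambda>u. - inv (\<lambda>v. \<Phi>' (0, v)) (\<Phi>' (u, 0)))) (at x0)"
    using implicit_function[OF sm UNIV_I z d bij] by blast
  have sy: "s x = y x" if "x \<in> X \<inter> X0" for x using unique zero that by blast
  have "smooth_on (X \<inter> X0) s"
    by (rule smooth_on_cong[OF smooth_on_subset[OF smy open_Int[OF X(1) X0(1)] Int_lower1] sy])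
  moreover have "(s has_derivative (\<lambda>u. - inv (\<lambda>v. \<Phi>' (0, v)) (\<Phi>' (u, 0)))) (at x0)"
    by (rule has_derivative_transform_within_open[OF dy open_Int[OF X(1) X0(1)] _ sy[symmetric]])
       (use X X0 in auto)
  ultimately show ?thesis using X X0 by blast
qed

section \<open>Strong convexity along lines\<close>

definition strongly_convex_with :: "real \<Rightarrow> ('a::real_inner \<Rightarrow> real) \<Rightarrow> bool" where
  "strongly_convex_with \<mu> f \<longleftrightarrow> (\<forall>x y. \<forall>t::real. 0 \<le> t \<and> t \<le> 1 \<longrightarrow>
      f (t *\<^sub>R x + (1 - t) *\<^sub>R y) \<le> t * f x + (1 - t) * f y - \<mu> / 2 * t * (1 - t) * (norm (x - y))\<^sup>2)"

lemma strongly_convex_iff: "strongly_convex f \<longleftrightarrow> (\<exists>\<mu>>0. strongly_convex_with \<mu> f)"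
  unfolding strongly_convex_def strongly_convex_with_def ..

lemma strongly_convex_with_realD:
  fixes \<phi> :: "real \<Rightarrow> real"
  assumes "strongly_convex_with \<kappa> \<phi>" "0 \<le> l" "l \<le> 1"
  shows "\<phi> (l * a + (1 - l) * b) \<le> l * \<phi> a + (1 - l) * \<phi> b - \<kappa> / 2 * l * (1 - l) * (a - b)\<^sup>2"
  using assms unfolding strongly_convex_with_def by (simp add: power2_abs)

lemma strongly_convex_with_line:
  assumes "strongly_convex_with \<mu> f"
  shows "strongly_convex_with (\<mu> * (norm W)\<^sup>2) (\<lambda>t. f (A + t *\<^sub>R W))"
  unfolding strongly_convex_with_def
proof (intro allI impI)
  fix a b t :: real assume t: "0 \<le> t \<and> t \<le> 1"
  have e1: "t *\<^sub>R (A + a *\<^sub>R W) + (1 - t) *\<^sub>R (A + b *\<^sub>R W) = A + (t *\<^sub>R a + (1 - t) *\<^sub>R b) *\<^sub>R W"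
    by (simp add: algebra_simps)
  have "(A + a *\<^sub>R W) - (A + b *\<^sub>R W) = (a - b) *\<^sub>R W" by (simp add: algebra_simps)
  then have e2: "(norm ((A + a *\<^sub>R W) - (A + b *\<^sub>R W)))\<^sup>2 = (norm (a - b))\<^sup>2 * (norm W)\<^sup>2"
    by (simp add: power_mult_distrib)
  from assms t have "f (t *\<^sub>R (A + a *\<^sub>R W) + (1 - t) *\<^sub>R (A + b *\<^sub>R W))
      \<le> t * f (A + a *\<^sub>R W) + (1 - t) * f (A + b *\<^sub>R W)
         - \<mu> / 2 * t * (1 - t) * (norm ((A + a *\<^sub>R W) - (A + b *\<^sub>R W)))\<^sup>2"
    unfolding strongly_convex_with_def by blast
  then show "f (A + (t *\<^sub>R a + (1 - t) *\<^sub>R b) *\<^sub>R W) \<le> t * f (A + a *\<^sub>R W) + (1 - t) * f (A + b *\<^sub>R W)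
      - \<mu> * (norm W)\<^sup>2 / 2 * t * (1 - t) * (norm (a - b))\<^sup>2"
    unfolding e1 e2 by (simp add: algebra_simps)
qed

lemma strongly_convex_with_first_order:
  fixes \<phi> :: "real \<Rightarrow> real"
  assumes sc: "strongly_convex_with \<kappa> \<phi>" and d: "(\<phi> has_real_derivative d) (at s)"
  shows "\<phi> s + d * (t - s) + \<kappa> / 2 * (t - s)\<^sup>2 \<le> \<phi> t"
proof -
  define g where "g l = \<phi> (s + l * (t - s))" for l
  have "((\<lambda>l. s + l * (t - s)) has_real_derivative (t - s)) (at 0)"
    by (auto intro!: derivative_eq_intros)
  from DERIV_chain2[OF _ this, of \<phi> d] d have "(g has_real_derivative d * (t - s)) (at 0)"
    unfolding g_def by simp
  then have "((\<lambda>l. (g l - g 0) / (l - 0)) \<longlongrightarrow> d * (t - s)) (at 0)"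
    using has_field_derivative_iff by blast
  then have lim1: "((\<lambda>l. (g l - g 0) / l) \<longlongrightarrow> d * (t - s)) (at_right 0)"
    by (simp add: filterlim_at_split)
  have lim2: "((\<lambda>l. \<phi> t - \<phi> s - \<kappa> / 2 * (1 - l) * (t - s)\<^sup>2) \<longlongrightarrow> \<phi> t - \<phi> s - \<kappa> / 2 * (1 - 0) * (t - s)\<^sup>2) (at_right 0)"
    by (intro tendsto_intros)
  have "\<forall>\<^sub>F l in at_right 0. (g l - g 0) / l \<le> \<phi> t - \<phi> s - \<kappa> / 2 * (1 - l) * (t - s)\<^sup>2"
  proof -
    have "\<forall>\<^sub>F l in at_right (0::real). l < 1"
      using eventually_at_right_real[of 0 1] by (rule eventually_mono) auto
    moreover have "\<forall>\<^sub>F l in at_right (0::real). 0 < l"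
      by (simp add: eventually_at_right_less)
    ultimately show ?thesis
    proof eventually_elim
      case (elim l)
      have "g l = \<phi> (l * t + (1 - l) * s)" unfolding g_def by (simp add: algebra_simps)
      also have "\<dots> \<le> l * \<phi> t + (1 - l) * \<phi> s - \<kappa> / 2 * l * (1 - l) * (t - s)\<^sup>2"
        using strongly_convex_with_realD[OF sc, of l t s] elim by simp
      finally have "g l - g 0 \<le> l * (\<phi> t - \<phi> s - \<kappa> / 2 * (1 - l) * (t - s)\<^sup>2)"
        unfolding g_def by (simp add: algebra_simps)
      then show ?case using elim by (simp add: divide_le_eq mult.commute)
    qed
  qed
  from tendsto_le[OF trivial_limit_at_right_real lim2 lim1 this] show ?thesis by simp
qed

lemma strongly_convex_with_second_order:
  fixes \<phi> \<phi>' :: "real \<Rightarrow> real"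
  assumes sc: "strongly_convex_with \<kappa> \<phi>"
    and d: "\<And>t. (\<phi> has_real_derivative \<phi>' t) (at t)" and d2: "(\<phi>' has_real_derivative q) (at 0)"
  shows "\<kappa> \<le> q"
proof -
  have "((\<lambda>t. (\<phi>' t - \<phi>' 0) / (t - 0)) \<longlongrightarrow> q) (at 0)"
    using d2 has_field_derivative_iff by blast
  then have lim: "((\<lambda>t. (\<phi>' t - \<phi>' 0) / t) \<longlongrightarrow> q) (at_right 0)"
    by (simp add: filterlim_at_split)
  have "\<forall>\<^sub>F t in at_right (0::real). 0 < t"
    by (simp add: eventually_at_right_less)
  then have "\<forall>\<^sub>F t in at_right 0. \<kappa> \<le> (\<phi>' t - \<phi>' 0) / t"
  proof eventually_elim
    case (elim t)
    \<comment> \<open>adding the first-order bounds at \<open>0\<close> and at \<open>t\<close> gives monotonicity of \<open>\<phi>'\<close> with rate \<open>\<kappa>\<close>\<close>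
    have "\<phi> 0 + \<phi>' 0 * (t - 0) + \<kappa> / 2 * (t - 0)\<^sup>2 \<le> \<phi> t"
      by (rule strongly_convex_with_first_order[OF sc d])
    moreover have "\<phi> t + \<phi>' t * (0 - t) + \<kappa> / 2 * (0 - t)\<^sup>2 \<le> \<phi> 0"
      by (rule strongly_convex_with_first_order[OF sc d])
    ultimately have "\<kappa> * t\<^sup>2 \<le> (\<phi>' t - \<phi>' 0) * t" by (simp add: algebra_simps power2_eq_square)
    then show ?case using elim by (simp add: le_divide_eq power2_eq_square mult.assoc)
  qed
  from tendsto_le[OF trivial_limit_at_right_real lim tendsto_const this] show ?thesis .
qed

lemma grad_unique:
  fixes G :: "'a::euclidean_space \<Rightarrow> real"
  assumes "(G has_derivative (\<lambda>h. g \<bullet> h)) (at p)"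
  shows "grad G p = g"
  unfolding grad_def
proof (rule the_equality[where P="\<lambda>g. (G has_derivative (\<lambda>h. g \<bullet> h)) (at p)", OF assms])
  fix g' assume "(G has_derivative (\<lambda>h. g' \<bullet> h)) (at p)"
  from has_derivative_unique[OF this assms] have "(g' - g) \<bullet> (g' - g) = 0"
    by (metis inner_diff_left diff_self)
  then show "g' = g" by simp
qed

lemma
  fixes G :: "'a::euclidean_space \<Rightarrow> real"
  assumes "(G has_derivative G') (at p)"
  shows grad_eq_sum_Basis: "grad G p = (\<Sum>b\<in>Basis. G' b *\<^sub>R b)"
    and has_derivative_grad: "(G has_derivative (\<lambda>h. grad G p \<bullet> h)) (at p)"
proof -
  have "G' h = (\<Sum>b\<in>Basis. G' b *\<^sub>R b) \<bullet> h" for h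
  proof -
    have "G' h = (\<Sum>b\<in>Basis. (h \<bullet> b) *\<^sub>R G' b)"
      by (rule linear_eq_sum_Basis[OF has_derivative_linear[OF assms]])
    also have "\<dots> = (\<Sum>b\<in>Basis. G' b *\<^sub>R b) \<bullet> h"
      by (simp add: inner_sum_left mult.commute inner_commute[of h])
    finally show ?thesis .
  qed
  then have d: "(G has_derivative (\<lambda>h. (\<Sum>b\<in>Basis. G' b *\<^sub>R b) \<bullet> h)) (at p)"
    using assms by (metis (no_types, lifting) ext)
  show "grad G p = (\<Sum>b\<in>Basis. G' b *\<^sub>R b)" by (rule grad_unique[OF d])
  with d show "(G has_derivative (\<lambda>h. grad G p \<bullet> h)) (at p)" by simp
qed

lemma grad_eq_0:
  fixes G :: "'a::euclidean_space \<Rightarrow> real"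
  shows "(G has_derivative (\<lambda>_. 0)) (at p) \<Longrightarrow> grad G p = 0"
  by (simp add: grad_eq_sum_Basis)

lemma smooth_on_grad:
  fixes G :: "'a::euclidean_space \<Rightarrow> real"
  assumes "smooth_on UNIV G"
  shows "smooth_on UNIV (grad G)"
proof -
  have "smooth_on UNIV (\<lambda>p. \<Sum>b\<in>Basis. smooth_deriv UNIV G p b *\<^sub>R b)"
    by (rule smooth_on_sum[OF open_UNIV], rule smooth_on_scaleR_const, rule smooth_on_smooth_deriv[OF assms])
  then show ?thesis
    by (rule smooth_on_cong) (simp add: grad_eq_sum_Basis[OF has_derivative_smooth_deriv[OF assms UNIV_I]])
qed

lemma has_derivative_grad_hess:
  fixes G :: "'a::euclidean_space \<Rightarrow> real"
  assumes "smooth_on UNIV G"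
  shows "(grad G has_derivative hess G p) (at p)"
  unfolding hess_def
  using frechet_derivative_works smooth_on_differentiable[OF smooth_on_grad[OF assms], of p] by blast

lemma linear_hess:
  fixes G :: "'a::euclidean_space \<Rightarrow> real"
  shows "smooth_on UNIV G \<Longrightarrow> linear (hess G p)"
  using has_derivative_grad_hess has_derivative_linear by blast

lemma
  fixes G :: "'a::euclidean_space \<Rightarrow> real"
  assumes "smooth_on UNIV G"
  shows has_real_derivative_line: "((\<lambda>t. G (p + t *\<^sub>R x)) has_real_derivative (grad G (p + t *\<^sub>R x) \<bullet> x)) (at t)"
    and has_real_derivative_line_grad:
      "((\<lambda>t. grad G (p + t *\<^sub>R x) \<bullet> x) has_real_derivative (hess G p x \<bullet> x)) (at 0)"
proof -
  have l: "((\<lambda>t. p + t *\<^sub>R x) has_derivative (\<lambda>h. h *\<^sub>R x)) (at t)" for t :: real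
    by (auto intro!: derivative_eq_intros)
  have "((\<lambda>t. G (p + t *\<^sub>R x)) has_derivative (\<lambda>h. grad G (p + t *\<^sub>R x) \<bullet> (h *\<^sub>R x))) (at t)"
    using has_derivative_compose[OF l has_derivative_grad[OF has_derivative_smooth_deriv[OF assms UNIV_I]]]
    by (simp add: o_def)
  then show "((\<lambda>t. G (p + t *\<^sub>R x)) has_real_derivative (grad G (p + t *\<^sub>R x) \<bullet> x)) (at t)"
    unfolding has_field_derivative_def by (simp add: mult_commute_abs)
  have "((\<lambda>t. grad G (p + t *\<^sub>R x)) has_derivative (\<lambda>h. hess G (p + 0 *\<^sub>R x) (h *\<^sub>R x))) (at 0)"
    using has_derivative_compose[OF l[of 0] has_derivative_grad_hess[OF assms, of "p + 0 *\<^sub>R x"]]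
    by (simp add: o_def)
  then have "((\<lambda>t. grad G (p + t *\<^sub>R x) \<bullet> x) has_derivative (\<lambda>h. hess G p (h *\<^sub>R x) \<bullet> x)) (at 0)"
    by (intro has_derivative_inner_left) simp
  moreover have "hess G p (h *\<^sub>R x) \<bullet> x = (hess G p x \<bullet> x) * h" for h
    using linear_scale[OF linear_hess[OF assms]] by simp
  ultimately show "((\<lambda>t. grad G (p + t *\<^sub>R x) \<bullet> x) has_real_derivative (hess G p x \<bullet> x)) (at 0)"
    unfolding has_field_derivative_def by (simp add: mult_commute_abs)
qed

lemma
  fixes F :: "'a::euclidean_space \<Rightarrow> real" and f :: "'b::real_inner \<Rightarrow> real"
  assumes F: "smooth_on UNIV F" and f: "strongly_convex_with \<mu> f"
    and line: "\<And>t. F (p + t *\<^sub>R x) = f (A + t *\<^sub>R W)"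
  shows hess_ge_strongly_convex_line: "\<mu> * (norm W)\<^sup>2 \<le> hess F p x \<bullet> x"
    and ge_strongly_convex_line: "grad F p \<bullet> x = 0 \<Longrightarrow> F p + \<mu> / 2 * (norm W)\<^sup>2 \<le> F (p + x)"
proof -
  define \<phi> where "\<phi> t = F (p + t *\<^sub>R x)" for t
  have sc: "strongly_convex_with (\<mu> * (norm W)\<^sup>2) \<phi>"
    unfolding \<phi>_def line by (rule strongly_convex_with_line[OF f])
  have d: "(\<phi> has_real_derivative (grad F (p + t *\<^sub>R x) \<bullet> x)) (at t)" for t
    unfolding \<phi>_def by (rule has_real_derivative_line[OF F])
  show "\<mu> * (norm W)\<^sup>2 \<le> hess F p x \<bullet> x"
    by (rule strongly_convex_with_second_order[OF sc d has_real_derivative_line_grad[OF F]])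
  assume "grad F p \<bullet> x = 0"
  then have "(\<phi> has_real_derivative 0) (at 0)" using d[of 0] by simp
  from strongly_convex_with_first_order[OF sc this, of 1]
  show "F p + \<mu> / 2 * (norm W)\<^sup>2 \<le> F (p + x)" by (simp add: \<phi>_def)
qed

section \<open>Partial minimizers of \<open>F(U,V) = f(UV\<^sup>T)\<close>\<close>

lemma bounded_bilinear_mult_transpose:
  "bounded_bilinear (\<lambda>(U::real^'k^'m) (V::real^'k^'n). U ** transpose V)"
proof -
  have "bilinear (\<lambda>(U::real^'k^'m) (V::real^'k^'n). U ** transpose V)"
    unfolding bilinear_def
    by (auto simp: linear_iff matrix_matrix_mult_def transpose_def vec_eq_iff sum.distrib sum_distrib_left
        algebra_simps)
  then show ?thesis by (simp add: bilinear_conv_bounded_bilinear)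
qed

lemma smooth_on_factF:
  fixes f :: "real^'n^'m \<Rightarrow> real"
  assumes "smooth_on UNIV f"
  shows "smooth_on UNIV (factF f :: (real^'k^'m) \<times> (real^'k^'n) \<Rightarrow> real)"
proof -
  have "smooth_on UNIV (\<lambda>p::(real^'k^'m) \<times> (real^'k^'n). fst p ** transpose (snd p))"
    using smooth_on_bilinear[OF bounded_bilinear_mult_transpose smooth_on_fst[OF open_UNIV]
        smooth_on_snd[OF open_UNIV]] by simp
  then have "smooth_on UNIV (\<lambda>p::(real^'k^'m) \<times> (real^'k^'n). f (fst p ** transpose (snd p)))"
    by (rule smooth_on_compose[OF _ assms]) simp
  then show ?thesis unfolding factF_def[abs_def] .
qed

lemma factF_add_fst:
  "factF f ((U, V) + t *\<^sub>R (u, 0)) = f (U ** transpose V + t *\<^sub>R (u ** transpose V))"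
  unfolding factF_def
  using bounded_bilinear.add_left[OF bounded_bilinear_mult_transpose, of U "t *\<^sub>R u" V]
        bounded_bilinear.scaleR_left[OF bounded_bilinear_mult_transpose, of t u V]
  by simp

lemma factF_add_snd:
  "factF f ((U, V) + t *\<^sub>R (0, v)) = f (U ** transpose V + t *\<^sub>R (U ** transpose v))"
  unfolding factF_def
  using bounded_bilinear.add_right[OF bounded_bilinear_mult_transpose, of U V "t *\<^sub>R v"]
        bounded_bilinear.scaleR_right[OF bounded_bilinear_mult_transpose, of U t v]
  by (simp add: transpose_scalar)

lemma mult_transpose_eq_0_left:
  fixes u :: "real^'k^'m" and V :: "real^'k^'n"
  assumes "inj ((*v) V)" "u ** transpose V = 0"
  shows "u = 0"
proof -
  have "V *v (u $ i) = (u ** transpose V) $ i" for i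
    by (simp add: vec_eq_iff matrix_matrix_mult_def matrix_vector_mult_def transpose_def mult.commute)
  then have "V *v (u $ i) = 0" for i using assms(2) by simp
  then have "u $ i = 0" for i using assms(1) by (metis injD matrix_vector_mult_0_right)
  then show ?thesis by (simp add: vec_eq_iff)
qed

lemma mult_transpose_eq_0_right:
  fixes U :: "real^'k^'m" and v :: "real^'k^'n"
  assumes "inj ((*v) U)" "U ** transpose v = 0"
  shows "v = 0"
proof (rule mult_transpose_eq_0_left[OF assms(1)])
  have "v ** transpose U = transpose (U ** transpose v)" by (simp add: matrix_transpose_mul)
  then show "v ** transpose U = 0" using assms(2) by (simp add: transpose_def vec_eq_iff)
qed

lemma inj_matrix_vector_mult_near:
  fixes A :: "real^'k^'n"
  assumes "inj ((*v) A)"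
  obtains e where "e > 0" "\<And>B. dist B A < e \<Longrightarrow> inj ((*v) B)"
proof -
  obtain c where c: "c > 0" "\<And>x. c * norm x \<le> norm (A *v x)"
    using linear_inj_bounded_below_pos[OF matrix_vector_mul_linear assms] by blast
  define K where "K = real CARD('n) * real CARD('k)"
  have K: "K > 0" unfolding K_def by simp
  show ?thesis
  proof (rule that[of "c / K"])
    show "c / K > 0" using c K by simp
    fix B :: "real^'k^'n" assume d: "dist B A < c / K"
    have "\<bar>(B - A) $ i $ j\<bar> \<le> norm (B - A)" for i j
      using component_le_norm_cart Finite_Cartesian_Product.norm_nth_le order_trans by blast
    then have on: "onorm ((*v) (B - A)) \<le> K * norm (B - A)"
      unfolding K_def by (rule onorm_le_matrix_component)
    have "B *v x \<noteq> 0" if "x \<noteq> 0" for x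
    proof
      assume Bx: "B *v x = 0"
      have "norm ((B - A) *v x) \<le> onorm ((*v) (B - A)) * norm x"
        by (rule onorm[OF matrix_vector_mul_bounded_linear])
      also have "\<dots> \<le> K * norm (B - A) * norm x" using on by (simp add: mult_right_mono)
      also have "\<dots> < c * norm x"
      proof (rule mult_strict_right_mono)
        show "K * norm (B - A) < c" using d K by (simp add: dist_norm less_divide_eq mult.commute)
      qed (use that in simp)
      also have "\<dots> \<le> norm (A *v x)" by (rule c(2))
      also have "\<dots> = norm ((B - A) *v x)" using Bx by (simp add: matrix_vector_mult_diff_rdistrib)
      finally show False by simp
    qed
    then show "inj ((*v) B)"
      using linear_injective_0[OF matrix_vector_mul_linear] by blast
  qed
qed

lemma the_unique_min_eq:
  fixes \<phi> :: "'a::ab_group_add \<Rightarrow> real"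
  assumes ge: "\<And>y. \<phi> y0 + q (y - y0) \<le> \<phi> y" and pos: "\<And>z. z \<noteq> 0 \<Longrightarrow> 0 < q z"
  shows "(THE y. \<forall>y'. \<phi> y \<le> \<phi> y') = y0"
proof (rule the_equality)
  show "\<forall>y'. \<phi> y0 \<le> \<phi> y'"
  proof
    fix y' show "\<phi> y0 \<le> \<phi> y'"
      using ge[of y'] pos[of "y' - y0"] by (cases "y' = y0") auto
  qed
  fix y assume "\<forall>y'. \<phi> y \<le> \<phi> y'"
  then have "q (y - y0) \<le> 0" using ge[of y] by (metis add_le_cancel_left add_0_right order_trans)
  then show "y = y0" using pos[of "y - y0"] by force
qed

lemma S1hat_eq:
  fixes f :: "real^'n^'m \<Rightarrow> real" and U :: "real^'k^'m" and V :: "real^'k^'n"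
  assumes sm: "smooth_on UNIV f" and sc: "strongly_convex_with \<mu> f" and \<mu>: "0 < \<mu>"
    and inj: "inj ((*v) V)" and crit: "fst (grad (factF f) (U, V)) = 0"
  shows "S1hat f V = U"
  unfolding S1hat_def
proof (rule the_unique_min_eq)
  fix U'
  have "grad (factF f) (U, V) \<bullet> (U' - U, 0) = 0" using crit by (simp add: inner_prod_def)
  from ge_strongly_convex_line[OF smooth_on_factF[OF sm] sc factF_add_fst this]
  show "factF f (U, V) + \<mu> / 2 * (norm ((U' - U) ** transpose V))\<^sup>2 \<le> factF f (U', V)" by simp
next
  fix z :: "real^'k^'m" assume "z \<noteq> 0"
  then have "z ** transpose V \<noteq> 0" using mult_transpose_eq_0_left[OF inj] by blast
  then show "0 < \<mu> / 2 * (norm (z ** transpose V))\<^sup>2" using \<mu> by simp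
qed

lemma S2hat_eq:
  fixes f :: "real^'n^'m \<Rightarrow> real" and U :: "real^'k^'m" and V :: "real^'k^'n"
  assumes sm: "smooth_on UNIV f" and sc: "strongly_convex_with \<mu> f" and \<mu>: "0 < \<mu>"
    and inj: "inj ((*v) U)" and crit: "snd (grad (factF f) (U, V)) = 0"
  shows "S2hat f U = V"
  unfolding S2hat_def
proof (rule the_unique_min_eq)
  fix V'
  have "grad (factF f) (U, V) \<bullet> (0, V' - V) = 0" using crit by (simp add: inner_prod_def)
  from ge_strongly_convex_line[OF smooth_on_factF[OF sm] sc factF_add_snd this]
  show "factF f (U, V) + \<mu> / 2 * (norm (U ** transpose (V' - V)))\<^sup>2 \<le> factF f (U, V')" by simp
next
  fix z :: "real^'k^'n" assume "z \<noteq> 0"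
  then have "U ** transpose z \<noteq> 0" using mult_transpose_eq_0_right[OF inj] by blast
  then show "0 < \<mu> / 2 * (norm (U ** transpose z))\<^sup>2" using \<mu> by simp
qed

lemma factF_hess_fst_pos:
  fixes f :: "real^'n^'m \<Rightarrow> real" and U :: "real^'k^'m" and V :: "real^'k^'n"
  assumes sm: "smooth_on UNIV f" and sc: "strongly_convex_with \<mu> f" and \<mu>: "0 < \<mu>"
    and inj: "inj ((*v) V)" and "u \<noteq> 0"
  shows "0 < u \<bullet> fst (hess (factF f) (U, V) (u, 0))"
proof -
  have "u ** transpose V \<noteq> 0" using mult_transpose_eq_0_left[OF inj] \<open>u \<noteq> 0\<close> by blast
  then have "0 < \<mu> * (norm (u ** transpose V))\<^sup>2" using \<mu> by simp
  also have "\<dots> \<le> hess (factF f) (U, V) (u, 0) \<bullet> (u, 0)"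
    by (rule hess_ge_strongly_convex_line[OF smooth_on_factF[OF sm] sc factF_add_fst])
  finally show ?thesis by (simp add: inner_prod_def inner_commute)
qed

lemma factF_hess_snd_pos:
  fixes f :: "real^'n^'m \<Rightarrow> real" and U :: "real^'k^'m" and V :: "real^'k^'n"
  assumes sm: "smooth_on UNIV f" and sc: "strongly_convex_with \<mu> f" and \<mu>: "0 < \<mu>"
    and inj: "inj ((*v) U)" and "v \<noteq> 0"
  shows "0 < v \<bullet> snd (hess (factF f) (U, V) (0, v))"
proof -
  have "U ** transpose v \<noteq> 0" using mult_transpose_eq_0_right[OF inj] \<open>v \<noteq> 0\<close> by blast
  then have "0 < \<mu> * (norm (U ** transpose v))\<^sup>2" using \<mu> by simp
  also have "\<dots> \<le> hess (factF f) (U, V) (0, v) \<bullet> (0, v)"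
    by (rule hess_ge_strongly_convex_line[OF smooth_on_factF[OF sm] sc factF_add_snd])
  finally show ?thesis by (simp add: inner_prod_def inner_commute)
qed

lemma S1hat_smooth_near:
  fixes f :: "real^'n^'m \<Rightarrow> real" and Us :: "real^'k^'m" and Vs :: "real^'k^'n"
  defines "H \<equiv> hess (factF f) (Us, Vs)"
  assumes sm: "smooth_on UNIV f" and sc: "strongly_convex_with \<mu> f" and \<mu>: "0 < \<mu>"
    and inj: "inj ((*v) Vs)" and crit: "grad (factF f) (Us, Vs) = 0"
    and bij: "bij (\<lambda>u. fst (H (u, 0)))"
  obtains X where "open X" "Vs \<in> X" "smooth_on X (S1hat f)"
    "(S1hat f has_derivative (\<lambda>v. - inv (\<lambda>u. fst (H (u, 0))) (fst (H (0, v))))) (at Vs)"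
proof -
  define F where "F = (factF f :: (real^'k^'m) \<times> (real^'k^'n) \<Rightarrow> real)"
  have smF: "smooth_on UNIV F" unfolding F_def by (rule smooth_on_factF[OF sm])
  define \<Phi> where "\<Phi> q = fst (grad F (snd q, fst q))" for q :: "(real^'k^'n) \<times> (real^'k^'m)"
  have "smooth_on UNIV (\<lambda>q::(real^'k^'n) \<times> (real^'k^'m). grad F (snd q, fst q))"
    by (rule smooth_on_compose[OF smooth_on_Pair[OF smooth_on_snd smooth_on_fst] smooth_on_grad[OF smF]]) simp_all
  then have sm\<Phi>: "smooth_on UNIV \<Phi>" unfolding \<Phi>_def by (rule smooth_on_linear_comp[OF _ bounded_linear_fst])
  have "(grad F has_derivative H) (at (Us, Vs))"
    unfolding H_def F_def by (rule has_derivative_grad_hess[OF smooth_on_factF[OF sm]])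
  then have "(grad F has_derivative H) (at ((\<lambda>q::(real^'k^'n) \<times> (real^'k^'m). (snd q, fst q)) (Vs, Us)))"
    by simp
  from has_derivative_compose[OF has_derivative_Pair[OF has_derivative_snd[OF has_derivative_ident]
        has_derivative_fst[OF has_derivative_ident]] this]
  have d: "(\<Phi> has_derivative (\<lambda>h. fst (H (snd h, fst h)))) (at (Vs, Us))"
    unfolding \<Phi>_def by (intro has_derivative_fst) (simp add: o_def)
  obtain e where e: "e > 0" "\<And>B. dist B Vs < e \<Longrightarrow> inj ((*v) B)"
    using inj_matrix_vector_mult_near[OF inj] by blast
  have unique: "S1hat f V = U" if V: "V \<in> ball Vs e" and z: "\<Phi> (V, U) = 0" for V U
  proof (rule S1hat_eq[OF sm sc \<mu>])
    show "inj ((*v) V)" using e(2)[of V] V by (simp add: dist_commute)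
    show "fst (grad (factF f) (U, V)) = 0" using z by (simp add: \<Phi>_def F_def)
  qed
  have z: "\<Phi> (Vs, Us) = 0" using crit by (simp add: \<Phi>_def F_def)
  have bij': "bij (\<lambda>u. fst (H (snd (0, u), fst (0, u))))" using bij by simp
  have "Vs \<in> ball Vs e" using e(1) by simp
  from smooth_solution_map[where s="S1hat f", OF sm\<Phi> z d bij' open_ball this unique] show ?thesis
    using that by auto
qed

lemma S2hat_smooth_near:
  fixes f :: "real^'n^'m \<Rightarrow> real" and Us :: "real^'k^'m" and Vs :: "real^'k^'n"
  defines "H \<equiv> hess (factF f) (Us, Vs)"
  assumes sm: "smooth_on UNIV f" and sc: "strongly_convex_with \<mu> f" and \<mu>: "0 < \<mu>"
    and inj: "inj ((*v) Us)" and crit: "grad (factF f) (Us, Vs) = 0"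
    and bij: "bij (\<lambda>v. snd (H (0, v)))"
  obtains X where "open X" "Us \<in> X" "smooth_on X (S2hat f)"
    "(S2hat f has_derivative (\<lambda>u. - inv (\<lambda>v. snd (H (0, v))) (snd (H (u, 0))))) (at Us)"
proof -
  define F where "F = (factF f :: (real^'k^'m) \<times> (real^'k^'n) \<Rightarrow> real)"
  have smF: "smooth_on UNIV F" unfolding F_def by (rule smooth_on_factF[OF sm])
  define \<Phi> where "\<Phi> q = snd (grad F q)" for q
  have sm\<Phi>: "smooth_on UNIV \<Phi>"
    unfolding \<Phi>_def by (rule smooth_on_linear_comp[OF smooth_on_grad[OF smF] bounded_linear_snd])
  have d: "(\<Phi> has_derivative (\<lambda>h. snd (H h))) (at (Us, Vs))"
    unfolding \<Phi>_def H_def F_def by (rule has_derivative_snd[OF has_derivative_grad_hess[OF smooth_on_factF[OF sm]]])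
  obtain e where e: "e > 0" "\<And>B. dist B Us < e \<Longrightarrow> inj ((*v) B)"
    using inj_matrix_vector_mult_near[OF inj] by blast
  have unique: "S2hat f U = V" if U: "U \<in> ball Us e" and z: "\<Phi> (U, V) = 0" for U V
  proof (rule S2hat_eq[OF sm sc \<mu>])
    show "inj ((*v) U)" using e(2)[of U] U by (simp add: dist_commute)
    show "snd (grad (factF f) (U, V)) = 0" using z by (simp add: \<Phi>_def F_def)
  qed
  have z: "\<Phi> (Us, Vs) = 0" using crit by (simp add: \<Phi>_def F_def)
  have "Us \<in> ball Us e" using e(1) by simp
  from smooth_solution_map[where s="S2hat f", OF sm\<Phi> z d bij open_ball this unique] show ?thesis
    using that by auto
qed

section \<open>Block operators and relaxed alternating steps\<close>

lemma bij_if_inner_pos: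
  fixes A :: "'a::euclidean_space \<Rightarrow> 'a"
  assumes lin: "linear A" and pos: "\<And>u. u \<noteq> 0 \<Longrightarrow> 0 < u \<bullet> A u"
  shows "bij A"
proof -
  have "inj A"
    unfolding linear_injective_0[OF lin] using pos by force
  with linear_injective_imp_surjective[OF lin] show ?thesis by (simp add: bij_def)
qed

lemma blockD_inner_pos:
  fixes H :: "'a::real_inner \<times> 'b::real_inner \<Rightarrow> 'a \<times> 'b"
  assumes "\<And>u. u \<noteq> 0 \<Longrightarrow> 0 < u \<bullet> fst (H (u, 0))" "\<And>v. v \<noteq> 0 \<Longrightarrow> 0 < v \<bullet> snd (H (0, v))"
    and "x \<noteq> 0"
  shows "0 < x \<bullet> blockD H x"
proof -
  have "x \<bullet> blockD H x = fst x \<bullet> fst (H (fst x, 0)) + snd x \<bullet> snd (H (0, snd x))"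
    by (simp add: blockD_def inner_prod_def)
  moreover have "fst x \<noteq> 0 \<or> snd x \<noteq> 0" using \<open>x \<noteq> 0\<close> by (simp add: prod_eq_iff)
  ultimately show ?thesis
    using assms(1)[of "fst x"] assms(2)[of "snd x"]
    by (cases "fst x = 0"; cases "snd x = 0") auto
qed

lemma
  fixes H :: "'a::real_vector \<times> 'b::real_vector \<Rightarrow> 'a \<times> 'b"
  defines "A1 \<equiv> \<lambda>u. fst (H (u, 0))" and "A2 \<equiv> \<lambda>v. snd (H (0, v))"
  assumes H: "linear H" and A1: "bij A1" and A2: "bij A2"
  shows neg_inv_blockD_blockE: "- inv (blockD H) (blockE H (u, v)) = (0, - inv A2 (snd (H (u, 0))))"
    and neg_inv_blockD_blockEt: "- inv (blockD H) (blockEt H (u, v)) = (- inv A1 (fst (H (0, v))), 0)"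
proof -
  have inj: "inj (blockD H)"
    using A1 A2 unfolding A1_def A2_def blockD_def bij_def inj_def by (simp add: prod_eq_iff)
  have inv: "inv (blockD H) (a, b) = (inv A1 a, inv A2 b)" for a b
  proof (rule inv_f_eq[OF inj])
    have "A1 (inv A1 a) = a" "A2 (inv A2 b) = b"
      by (simp_all add: bij_is_surj[OF A1] bij_is_surj[OF A2] surj_f_inv_f)
    then show "blockD H (inv A1 a, inv A2 b) = (a, b)" by (simp add: blockD_def A1_def A2_def)
  qed
  have "H 0 = 0" by (rule linear_0[OF H])
  then have "A1 0 = 0" "A2 0 = 0" by (simp_all add: A1_def A2_def zero_prod_def)
  then have "inv A1 0 = 0" "inv A2 0 = 0"
    by (simp_all add: inv_f_eq bij_is_inj[OF A1] bij_is_inj[OF A2])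
  then show "- inv (blockD H) (blockE H (u, v)) = (0, - inv A2 (snd (H (u, 0))))"
    and "- inv (blockD H) (blockEt H (u, v)) = (- inv A1 (fst (H (0, v))), 0)"
    by (simp_all add: blockE_def blockEt_def inv)
qed

definition sor_step :: "('b \<Rightarrow> 'a) \<Rightarrow> ('a \<Rightarrow> 'b) \<Rightarrow> real \<Rightarrow> 'a \<times> 'b \<Rightarrow> 'a::real_vector \<times> 'b::real_vector" where
  "sor_step s1 s2 \<omega> x =
    (let u = (1 - \<omega>) *\<^sub>R fst x + \<omega> *\<^sub>R s1 (snd x) in (u, (1 - \<omega>) *\<^sub>R snd x + \<omega> *\<^sub>R s2 u))"

lemma Somega_eq_sor_step: "Somega f \<omega> = sor_step (S1hat f) (S2hat f) \<omega>"
  by (simp add: fun_eq_iff Somega_def sor_step_def Let_def)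

lemma has_derivative_sor_step:
  fixes s1 :: "'b::real_normed_vector \<Rightarrow> 'a::real_normed_vector"
  assumes d1: "(s1 has_derivative s1') (at (snd x))"
    and d2: "(s2 has_derivative s2') (at (fst (sor_step s1 s2 \<omega> x)))"
  shows "(sor_step s1 s2 \<omega> has_derivative sor_step s1' s2' \<omega>) (at x)"
proof -
  define h where "h y = (1 - \<omega>) *\<^sub>R fst y + \<omega> *\<^sub>R s1 (snd y)" for y
  define h' where "h' y = (1 - \<omega>) *\<^sub>R fst y + \<omega> *\<^sub>R s1' (snd y)" for y
  have "((\<lambda>y. s1 (snd y)) has_derivative (\<lambda>y. s1' (snd y))) (at x)"
    using has_derivative_compose[OF has_derivative_snd[OF has_derivative_ident] d1] by (simp add: o_def)
  then have dh: "(h has_derivative h') (at x)"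
    unfolding h_def h'_def by (intro derivative_intros)
  have "((\<lambda>y. s2 (h y)) has_derivative (\<lambda>y. s2' (h' y))) (at x)"
    using has_derivative_compose[OF dh, of s2 s2'] d2 by (simp add: o_def h_def sor_step_def Let_def)
  with dh have "((\<lambda>y. (h y, (1 - \<omega>) *\<^sub>R snd y + \<omega> *\<^sub>R s2 (h y))) has_derivative
      (\<lambda>y. (h' y, (1 - \<omega>) *\<^sub>R snd y + \<omega> *\<^sub>R s2' (h' y)))) (at x)"
    by (intro derivative_intros)
  moreover have "sor_step s1 s2 \<omega> = (\<lambda>y. (h y, (1 - \<omega>) *\<^sub>R snd y + \<omega> *\<^sub>R s2 (h y)))"
    and "sor_step s1' s2' \<omega> = (\<lambda>y. (h' y, (1 - \<omega>) *\<^sub>R snd y + \<omega> *\<^sub>R s2' (h' y)))"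
    by (simp_all add: fun_eq_iff sor_step_def h_def h'_def Let_def)
  ultimately show ?thesis by simp
qed

lemma smooth_on_sor_step:
  fixes s1 :: "'b::euclidean_space \<Rightarrow> 'a::euclidean_space"
  assumes sm1: "smooth_on X1 s1" and sm2: "smooth_on X2 s2"
  shows "smooth_on {x. snd x \<in> X1 \<and> fst (sor_step s1 s2 \<omega> x) \<in> X2} (sor_step s1 s2 \<omega>)"
proof -
  define h where "h x = (1 - \<omega>) *\<^sub>R fst x + \<omega> *\<^sub>R s1 (snd x)" for x :: "'a \<times> 'b"
  define T where "T = (UNIV :: 'a set) \<times> X1"
  have oT: "open T" unfolding T_def by (rule open_Times[OF open_UNIV smooth_on_open[OF sm1]])
  have "smooth_on T (\<lambda>x. s1 (snd x))"
    by (rule smooth_on_compose[OF smooth_on_snd[OF oT] sm1]) (simp add: T_def mem_Times_iff)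
  then have smh: "smooth_on T h"
    unfolding h_def by (rule smooth_on_add[OF smooth_on_const_scaleR[OF smooth_on_fst[OF oT]] smooth_on_const_scaleR])
  define W where "W = {x. snd x \<in> X1 \<and> fst (sor_step s1 s2 \<omega> x) \<in> X2}"
  have W: "W = h -` X2 \<inter> T" unfolding W_def T_def h_def sor_step_def Let_def by auto
  have oW: "open W"
    unfolding W by (rule continuous_on_open_vimage[OF oT, THEN iffD1, rule_format,
        OF smooth_on_continuous_on[OF smh] smooth_on_open[OF sm2]])
  have smhW: "smooth_on W h" by (rule smooth_on_subset[OF smh oW]) (simp add: W)
  have "smooth_on W (\<lambda>x. s2 (h x))" by (rule smooth_on_compose[OF smhW sm2]) (simp add: W)
  then have "smooth_on W (\<lambda>x. (h x, (1 - \<omega>) *\<^sub>R snd x + \<omega> *\<^sub>R s2 (h x)))"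
    by (rule smooth_on_Pair[OF smhW smooth_on_add[OF smooth_on_const_scaleR[OF smooth_on_snd[OF oW]]
          smooth_on_const_scaleR]])
  then show ?thesis
    unfolding W_def[symmetric] by (rule smooth_on_cong) (simp add: sor_step_def h_def Let_def)
qed

lemma sor_step_eq_inv:
  "sor_step s1 s2 \<omega> x = inv (\<lambda>y. y - \<omega> *\<^sub>R (0, s2 (fst y))) ((1 - \<omega>) *\<^sub>R x + \<omega> *\<^sub>R (s1 (snd x), 0))"
proof (rule inv_f_eq[symmetric])
  show "inj (\<lambda>y. y - \<omega> *\<^sub>R (0, s2 (fst y)))"
  proof (rule injI)
    fix y z assume eq: "y - \<omega> *\<^sub>R (0, s2 (fst y)) = z - \<omega> *\<^sub>R (0, s2 (fst z))"
    then have "fst y = fst z" by (simp add: prod_eq_iff)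
    with eq show "y = z" by (simp add: prod_eq_iff)
  qed
qed (simp add: sor_step_def Let_def prod_eq_iff algebra_simps)

lemma linear_blocks:
  fixes H :: "'a::real_vector \<times> 'b::real_vector \<Rightarrow> 'a \<times> 'b"
  assumes H: "linear H"
  shows "linear (\<lambda>u. fst (H (u, 0)))" "linear (\<lambda>v. fst (H (0, v)))"
    "linear (\<lambda>u. snd (H (u, 0)))" "linear (\<lambda>v. snd (H (0, v)))"
proof -
  have "H (a + b, 0) = H (a, 0) + H (b, 0)" "H (c *\<^sub>R a, 0) = c *\<^sub>R H (a, 0)"
    "H (0, a' + b') = H (0, a') + H (0, b')" "H (0, c *\<^sub>R a') = c *\<^sub>R H (0, a')" for a b a' b' c
    using linear_add[OF H, of "(a, 0)" "(b, 0)"] linear_scale[OF H, of c "(a, 0)"]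
      linear_add[OF H, of "(0, a')" "(0, b')"] linear_scale[OF H, of c "(0, a')"] by simp_all
  then show "linear (\<lambda>u. fst (H (u, 0)))" "linear (\<lambda>v. fst (H (0, v)))"
    "linear (\<lambda>u. snd (H (u, 0)))" "linear (\<lambda>v. snd (H (0, v)))"
    by (simp_all add: linear_iff)
qed

text \<open>\<open>N\<^sub>\<omega>\<close> is block lower triangular, so \<open>N\<^sub>\<omega>(x - sor_step s\<^sub>1' s\<^sub>2' \<omega> x) = H x\<close> can be checked block by block.\<close>

lemma sor_step_linear_eq:
  fixes H :: "'a::real_vector \<times> 'b::real_vector \<Rightarrow> 'a \<times> 'b"
  defines "A1 \<equiv> \<lambda>u. fst (H (u, 0))" and "A2 \<equiv> \<lambda>v. snd (H (0, v))"
  assumes H: "linear H" and bij1: "bij A1" and bij2: "bij A2" and \<omega>: "\<omega> \<noteq> 0"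
  shows "sor_step (\<lambda>v. - inv A1 (fst (H (0, v)))) (\<lambda>u. - inv A2 (snd (H (u, 0)))) \<omega> x
    = x - inv (\<lambda>y. (1 / \<omega>) *\<^sub>R blockD H y + blockE H y) (H x)"
proof -
  define s1' where "s1' v = - inv A1 (fst (H (0, v)))" for v
  define s2' where "s2' u = - inv A2 (snd (H (u, 0)))" for u
  define N where "N y = (1 / \<omega>) *\<^sub>R blockD H y + blockE H y" for y
  define B where "B u = snd (H (u, 0))" for u
  have lin1: "linear A1" and lin2: "linear A2" and linB: "linear B"
    using linear_blocks[OF H] unfolding A1_def A2_def B_def by simp_all
  have inj1: "inj A1" and inj2: "inj A2" using bij1 bij2 by (simp_all add: bij_is_inj)
  have s1': "A1 (s1' v) = - fst (H (0, v))" for v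
    using linear_neg[OF lin1] bij_is_surj[OF bij1] by (simp add: s1'_def surj_f_inv_f)
  have s2': "A2 (s2' u) = - B u" for u
    using linear_neg[OF lin2] bij_is_surj[OF bij2] by (simp add: s2'_def B_def surj_f_inv_f)
  have N: "N (a, b) = ((1 / \<omega>) *\<^sub>R A1 a, (1 / \<omega>) *\<^sub>R A2 b + B a)" for a b
    by (simp add: N_def blockD_def blockE_def A1_def A2_def B_def)
  have Hsplit: "H (u, v) = (A1 u + fst (H (0, v)), B u + A2 v)" for u v
    using linear_add[OF H, of "(u, 0)" "(0, v)"] by (simp add: A1_def A2_def B_def prod_eq_iff)
  have injN: "inj N"
  proof (rule injI)
    fix x y assume Nxy: "N x = N y"
    have "(1 / \<omega>) *\<^sub>R A1 (fst x) = (1 / \<omega>) *\<^sub>R A1 (fst y)"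
      using Nxy N[of "fst x" "snd x"] N[of "fst y" "snd y"] by simp
    then have "fst x = fst y" using \<omega> inj1 by (simp add: inj_eq)
    moreover have "(1 / \<omega>) *\<^sub>R A2 (snd x) + B (fst x) = (1 / \<omega>) *\<^sub>R A2 (snd y) + B (fst y)"
      using Nxy N[of "fst x" "snd x"] N[of "fst y" "snd y"] by simp
    ultimately have "snd x = snd y" using \<omega> inj2 by (simp add: inj_eq)
    with \<open>fst x = fst y\<close> show "x = y" by (simp add: prod_eq_iff)
  qed
  obtain u v where x: "x = (u, v)" by fastforce
  define d where "d = (1 - \<omega>) *\<^sub>R u + \<omega> *\<^sub>R s1' v"
  define w where "w = v - ((1 - \<omega>) *\<^sub>R v + \<omega> *\<^sub>R s2' d)"
  have "x - sor_step s1' s2' \<omega> x = (u - d, w)"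
    by (simp add: x d_def w_def sor_step_def Let_def)
  then have "N (x - sor_step s1' s2' \<omega> x) = ((1 / \<omega>) *\<^sub>R A1 (u - d), (1 / \<omega>) *\<^sub>R A2 w + B (u - d))"
    by (simp add: N)
  also have "A1 (u - d) = A1 u - ((1 - \<omega>) *\<^sub>R A1 u + \<omega> *\<^sub>R A1 (s1' v))"
    unfolding d_def by (simp only: linear_diff[OF lin1] linear_add[OF lin1] linear_scale[OF lin1])
  also have "\<dots> = \<omega> *\<^sub>R (A1 u + fst (H (0, v)))"
    by (simp add: s1' scaleR_diff_left scaleR_add_right)
  also have "A2 w = A2 v - ((1 - \<omega>) *\<^sub>R A2 v + \<omega> *\<^sub>R A2 (s2' d))"
    unfolding w_def by (simp only: linear_diff[OF lin2] linear_add[OF lin2] linear_scale[OF lin2])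
  also have "\<dots> = \<omega> *\<^sub>R (A2 v + B d)"
    by (simp add: s2' scaleR_diff_left scaleR_add_right)
  also have "B (u - d) = B u - B d" by (rule linear_diff[OF linB])
  also have "((1 / \<omega>) *\<^sub>R \<omega> *\<^sub>R (A1 u + fst (H (0, v))), (1 / \<omega>) *\<^sub>R \<omega> *\<^sub>R (A2 v + B d) + (B u - B d))
      = (A1 u + fst (H (0, v)), B u + A2 v)"
    using \<omega> by simp
  also have "\<dots> = H x" unfolding x by (rule Hsplit[symmetric])
  finally have "N (x - sor_step s1' s2' \<omega> x) = H x" .
  then have "inv N (H x) = x - sor_step s1' s2' \<omega> x" by (rule inv_f_eq[OF injN])
  then show ?thesis by (simp add: N_def[abs_def] s1'_def[abs_def] s2'_def[abs_def])
qed

theorem mainTheorem3: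
  fixes f :: "real^'n^'m \<Rightarrow> real"
    and Us :: "real^'k^'m" and Vs :: "real^'k^'n"
    and \<omega> :: real
  defines "F \<equiv> (factF f :: (real^'k^'m) \<times> (real^'k^'n) \<Rightarrow> real)"
  defines "H \<equiv> hess F (Us, Vs)"
  defines "D \<equiv> blockD H" and "E \<equiv> blockE H" and "Et \<equiv> blockEt H"
  defines "N \<equiv> (\<lambda>x. (1 / \<omega>) *\<^sub>R D x + E x)"
  defines "L \<equiv> (\<lambda>x. - (inv D (E x)))" and "R \<equiv> (\<lambda>x. - (inv D (Et x)))"
  assumes smooth: "smooth_on UNIV f"
    and sconv: "strongly_convex f"
    and crit: "(F has_derivative (\<lambda>_. 0)) (at (Us, Vs))"
    and rankU: "rank Us = CARD('k)" and rankV: "rank Vs = CARD('k)"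
    and omega: "\<omega> \<noteq> 0"
  shows "(\<forall>x. x \<noteq> 0 \<longrightarrow> x \<bullet> D x > 0)
    \<and> (\<exists>W. open W \<and> (Us, Vs) \<in> W \<and> smooth_on W (Somega f \<omega>))
    \<and> (Somega f \<omega> has_derivative (\<lambda>x. x - inv N (H x))) (at (Us, Vs))
    \<and> (\<forall>x. frechet_derivative (Somega f \<omega>) (at (Us, Vs)) x
            = inv (\<lambda>y. y - \<omega> *\<^sub>R L y) ((1 - \<omega>) *\<^sub>R x + \<omega> *\<^sub>R R x))
    \<and> (S2hat f) differentiable (at Us) \<and> (S1hat f) differentiable (at Vs)
    \<and> (\<forall>u v. L (u, v) = (0, frechet_derivative (S2hat f) (at Us) u))
    \<and> (\<forall>u v. R (u, v) = (frechet_derivative (S1hat f) (at Vs) v, 0))"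
proof -
  obtain \<mu> where \<mu>: "0 < \<mu>" and sc: "strongly_convex_with \<mu> f"
    using sconv unfolding strongly_convex_iff by blast
  have smF: "smooth_on UNIV F" unfolding F_def by (rule smooth_on_factF[OF smooth])
  have injU: "inj ((*v) Us)" and injV: "inj ((*v) Vs)" using rankU rankV full_rank_injective by blast+
  have g0: "grad F (Us, Vs) = 0" by (rule grad_eq_0[OF crit])
  have linH: "linear H" unfolding H_def by (rule linear_hess[OF smF])
  define A1 where "A1 u = fst (H (u, 0))" for u
  define A2 where "A2 v = snd (H (0, v))" for v
  have pos1: "0 < u \<bullet> A1 u" if "u \<noteq> 0" for u
    unfolding A1_def H_def F_def by (rule factF_hess_fst_pos[OF smooth sc \<mu> injV that])
  have pos2: "0 < v \<bullet> A2 v" if "v \<noteq> 0" for v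
    unfolding A2_def H_def F_def by (rule factF_hess_snd_pos[OF smooth sc \<mu> injU that])
  have bij1: "bij A1" and bij2: "bij A2"
    using bij_if_inner_pos[OF _ pos1] bij_if_inner_pos[OF _ pos2] linear_blocks[OF linH]
    unfolding A1_def[abs_def] A2_def[abs_def] by blast+
  define s1' where "s1' v = - inv A1 (fst (H (0, v)))" for v
  define s2' where "s2' u = - inv A2 (snd (H (u, 0)))" for u
  obtain X1 where X1: "open X1" "Vs \<in> X1" "smooth_on X1 (S1hat f)" and dS1: "(S1hat f has_derivative s1') (at Vs)"
    using S1hat_smooth_near[OF smooth sc \<mu> injV g0[unfolded F_def]] bij1
    unfolding s1'_def[abs_def] A1_def[abs_def] H_def F_def by blast
  obtain X2 where X2: "open X2" "Us \<in> X2" "smooth_on X2 (S2hat f)" and dS2: "(S2hat f has_derivative s2') (at Us)"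
    using S2hat_smooth_near[OF smooth sc \<mu> injU g0[unfolded F_def]] bij2
    unfolding s2'_def[abs_def] A2_def[abs_def] H_def F_def by blast
  have "S1hat f Vs = Us" using S1hat_eq[OF smooth sc \<mu> injV] g0 by (simp add: F_def)
  then have fixed: "fst (sor_step (S1hat f) (S2hat f) \<omega> (Us, Vs)) = Us"
    by (simp add: sor_step_def scaleR_left_distrib[symmetric])
  have dS: "(Somega f \<omega> has_derivative sor_step s1' s2' \<omega>) (at (Us, Vs))"
    unfolding Somega_eq_sor_step by (rule has_derivative_sor_step) (simp_all add: dS1 dS2 fixed)
  have "sor_step s1' s2' \<omega> x = x - inv N (H x)" for x
    unfolding s1'_def[abs_def] s2'_def[abs_def] A1_def[abs_def] A2_def[abs_def] N_def D_def E_def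
    by (rule sor_step_linear_eq[OF linH bij1[unfolded A1_def[abs_def]] bij2[unfolded A2_def[abs_def]] omega])
  then have T: "sor_step s1' s2' \<omega> = (\<lambda>x. x - inv N (H x))" ..
  have L: "L y = (0, s2' (fst y))" and R: "R y = (s1' (snd y), 0)" for y
    using neg_inv_blockD_blockE[OF linH, of "fst y" "snd y"] neg_inv_blockD_blockEt[OF linH, of "fst y" "snd y"]
      bij1 bij2 unfolding L_def R_def D_def E_def Et_def s1'_def s2'_def A1_def[abs_def] A2_def[abs_def] by simp_all
  have \<S>': "frechet_derivative (Somega f \<omega>) (at (Us, Vs)) = sor_step s1' s2' \<omega>"
    and S1': "frechet_derivative (S1hat f) (at Vs) = s1'" and S2': "frechet_derivative (S2hat f) (at Us) = s2'"
    using frechet_derivative_at[OF dS] frechet_derivative_at[OF dS1] frechet_derivative_at[OF dS2] by simp_all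
  have smS: "smooth_on {x. snd x \<in> X1 \<and> fst (sor_step (S1hat f) (S2hat f) \<omega> x) \<in> X2} (Somega f \<omega>)"
    unfolding Somega_eq_sor_step by (rule smooth_on_sor_step[OF X1(3) X2(3)])
  show ?thesis
  proof (intro conjI allI impI)
    show "0 < x \<bullet> D x" if "x \<noteq> 0" for x
      using blockD_inner_pos[of H, OF _ _ that] pos1 pos2 unfolding D_def A1_def A2_def by blast
    show "\<exists>W. open W \<and> (Us, Vs) \<in> W \<and> smooth_on W (Somega f \<omega>)"
      using smS smooth_on_open[OF smS] X1(2) X2(2) fixed by fastforce
    from dS T show "(Somega f \<omega> has_derivative (\<lambda>x. x - inv N (H x))) (at (Us, Vs))" by simp
    have "(\<lambda>y. y - \<omega> *\<^sub>R L y) = (\<lambda>y. y - \<omega> *\<^sub>R (0, s2' (fst y)))" by (simp add: L)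
    then show "frechet_derivative (Somega f \<omega>) (at (Us, Vs)) x
        = inv (\<lambda>y. y - \<omega> *\<^sub>R L y) ((1 - \<omega>) *\<^sub>R x + \<omega> *\<^sub>R R x)" for x
      unfolding \<S>' R by (simp add: sor_step_eq_inv)
    show "S2hat f differentiable at Us" "S1hat f differentiable at Vs"
      using dS1 dS2 by (auto simp: differentiable_def)
    show "L (u, v) = (0, frechet_derivative (S2hat f) (at Us) u)" for u v by (simp add: L S2')
    show "R (u, v) = (frechet_derivative (S1hat f) (at Vs) v, 0)" for u v by (simp add: R S1')
  qed
qed

end
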